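(* Let $\Gamma$ be a finitely generated group with finite symmetric generating set $S$, and let $\rho\colon\Gamma\curvearrowright\mathcal H$ be an affine action on a Hilbert space such that $\rho(\Gamma)$ has no fixed point. Fix $x\in\Gamma$. Then there exist a Hilbert space $\mathcal H'$, an affine action $\rho'\colon\Gamma\curvearrowright\mathcal H'$, and a nonconstant $\rho'$-equivariant map $f\colon\Gamma\to\mathcal H'$ minimizing the local energy at $x$, i.e. $E(f)(x)\le E(g)(x)$ for every $\rho'$-equivariant $g\colon\Gamma\to\mathcal H'$. Moreover, if the linear parts of $\rho$ satisfy $\|A(\gamma)\|\le C\,l(\gamma)^\sigma$ for all $\gamma\ne e$ for some $C>0,\sigma\ge0$, then the linear parts of $\rho'$ satisfy the same bound with the same $C,\sigma$.
   Context: Affine action $\rho(\gamma)(\mathbf v)=A(\gamma)\mathbf v+b(\gamma)$ with $A(\gamma)$ bounded linear; $l$ is word length w.r.t. $S$. $f$ is $\rho$-equivariant if $f(\gamma x)=\rho(\gamma)(f(x))$ for all $\gamma,x$. Local energy: $E(f)(x)=\frac12\sum_{x'\in\Gamma}\|f(x)-f(x')\|^2\mu(x\to x')=\frac1{2\#S}\sum_{s\in S}\|f(x)-f(xs)\|^2$, where $\mu(x\to x')=1/\#S$ if $x'=xs$ for some $s\in S$ and $0$ otherwise. *)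

theory Defs
  imports "HOL-Analysis.Analysis" "HOL-Algebra.Generated_Groups"
begin

definition word_length :: "('g, 'c) monoid_scheme \<Rightarrow> 'g set \<Rightarrow> 'g \<Rightarrow> nat" where
  "word_length G S \<gamma> =
     (LEAST n. \<exists>ws. length ws = n \<and> set ws \<subseteq> S \<and> foldr (\<otimes>\<^bsub>G\<^esub>) ws \<one>\<^bsub>G\<^esub> = \<gamma>)"

definition aff :: "('g \<Rightarrow> ('a::real_normed_vector \<Rightarrow>\<^sub>L 'a)) \<Rightarrow> ('g \<Rightarrow> 'a) \<Rightarrow> 'g \<Rightarrow> 'a \<Rightarrow> 'a" where
  "aff A b \<gamma> v = blinfun_apply (A \<gamma>) v + b \<gamma>"

definition affine_action ::
  "('g, 'c) monoid_scheme \<Rightarrow> ('g \<Rightarrow> ('a::real_normed_vector \<Rightarrow>\<^sub>L 'a)) \<Rightarrow> ('g \<Rightarrow> 'a) \<Rightarrow> bool" where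
  "affine_action G A b \<longleftrightarrow>
     (\<forall>v. aff A b \<one>\<^bsub>G\<^esub> v = v) \<and>
     (\<forall>\<gamma>\<in>carrier G. \<forall>\<delta>\<in>carrier G. \<forall>v.
        aff A b (\<gamma> \<otimes>\<^bsub>G\<^esub> \<delta>) v = aff A b \<gamma> (aff A b \<delta> v))"

definition has_fixed_point :: "('g, 'c) monoid_scheme \<Rightarrow> ('g \<Rightarrow> 'a \<Rightarrow> 'a) \<Rightarrow> bool" where
  "has_fixed_point G \<rho> \<longleftrightarrow> (\<exists>v. \<forall>\<gamma>\<in>carrier G. \<rho> \<gamma> v = v)"

definition equivariant :: "('g, 'c) monoid_scheme \<Rightarrow> ('g \<Rightarrow> 'a \<Rightarrow> 'a) \<Rightarrow> ('g \<Rightarrow> 'a) \<Rightarrow> bool" where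
  "equivariant G \<rho> f \<longleftrightarrow> (\<forall>\<gamma>\<in>carrier G. \<forall>x\<in>carrier G. f (\<gamma> \<otimes>\<^bsub>G\<^esub> x) = \<rho> \<gamma> (f x))"

definition local_energy ::
  "('g, 'c) monoid_scheme \<Rightarrow> 'g set \<Rightarrow> ('g \<Rightarrow> 'a::real_normed_vector) \<Rightarrow> 'g \<Rightarrow> real" where
  "local_energy G S f x = (1 / (2 * real (card S))) * (\<Sum>s\<in>S. (norm (f x - f (x \<otimes>\<^bsub>G\<^esub> s)))\<^sup>2)"

definition linear_growth_bound ::
  "('g, 'c) monoid_scheme \<Rightarrow> 'g set \<Rightarrow> ('g \<Rightarrow> ('a::real_normed_vector \<Rightarrow>\<^sub>L 'a)) \<Rightarrow> real \<Rightarrow> real \<Rightarrow> bool" where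
  "linear_growth_bound G S A C \<sigma> \<longleftrightarrow>
     (\<forall>\<gamma>\<in>carrier G. \<gamma> \<noteq> \<one>\<^bsub>G\<^esub> \<longrightarrow> norm (A \<gamma>) \<le> C * real (word_length G S \<gamma>) powr \<sigma>)"

end

theory Submission
  imports Defs "HOL-Library.Diagonal_Subsequence"
begin

text \<open>Since the action has no fixed point, the energy E v of the orbit map of v is positive
  everywhere, and a Gromov-type argument yields points p n at which sqrt E is, up to the factor
  1 - 1/(n+2), minimal on the ball of radius (n+1) sqrt (E (p n)). The cocycles
  g \<mapsto> (\<rho> g (p n) - p n) / sqrt (E (p n)) are bounded; along a subsequence all their inner
  products converge, and Gram--Schmidt realizes the limiting Gram matrix by a cocycle z in the given
  infinite-dimensional space. The linear parts pass to the limit on the closed span of the z g and are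
  extended by the identity on its orthogonal complement, so their norms are at most max 1 (norm (A g)).
  For the limit action the orbit map of 0 has energy 1, whereas almost-minimality of the p n gives
  every orbit map energy at least 1.\<close>

section \<open>Gram--Schmidt orthonormalisation\<close>

function gram_schmidt :: "(nat \<Rightarrow> 'v::real_inner) \<Rightarrow> nat \<Rightarrow> 'v" where
  "gram_schmidt d n =
     (let r = d n - (\<Sum>j<n. inner (d n) (gram_schmidt d j) *\<^sub>R gram_schmidt d j) in r /\<^sub>R norm r)"
  by auto
termination by (relation "Wellfounded.measure snd") auto

declare gram_schmidt.simps [simp del]

definition gram_schmidt_residual :: "(nat \<Rightarrow> 'v::real_inner) \<Rightarrow> nat \<Rightarrow> 'v" where
  "gram_schmidt_residual d n = d n - (\<Sum>j<n. inner (d n) (gram_schmidt d j) *\<^sub>R gram_schmidt d j)"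

lemma gram_schmidt_eq_normalized_residual:
  "gram_schmidt d n = gram_schmidt_residual d n /\<^sub>R norm (gram_schmidt_residual d n)"
  by (subst gram_schmidt.simps) (simp add: gram_schmidt_residual_def Let_def)

lemma gram_schmidt_orthonormal_upto:
  "(\<forall>i<n. inner (gram_schmidt d i) (gram_schmidt d n) = 0) \<and>
   inner (gram_schmidt d n) (gram_schmidt d n) = (if gram_schmidt d n = 0 then 0 else 1)"
proof (induction n rule: less_induct)
  case (less n)
  let ?e = "gram_schmidt d" and ?r = "gram_schmidt_residual d n"
  have orth: "inner (?e i) (?e k) = 0" if "i < n" "k < n" "i \<noteq> k" for i k
    using less that by (metis inner_commute linorder_neqE_nat)
  have residual_orth: "inner ?r (?e i) = 0" if "i < n" for i
  proof -
    have "(\<Sum>j<n. inner (d n) (?e j) * inner (?e j) (?e i)) = inner (d n) (?e i) * inner (?e i) (?e i)"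
      by (subst sum.remove[of _ i]) (use that orth in \<open>auto intro!: sum.neutral\<close>)
    also have "\<dots> = inner (d n) (?e i)"
      using less that by auto
    finally show ?thesis
      by (simp add: gram_schmidt_residual_def inner_diff_left inner_sum_left)
  qed
  have "inner (?e i) (?e n) = 0" if "i < n" for i
    using residual_orth[OF that]
    by (simp add: gram_schmidt_eq_normalized_residual[of d n] inner_commute)
  moreover have "inner (?e n) (?e n) = (if ?e n = 0 then 0 else 1)"
    by (simp add: gram_schmidt_eq_normalized_residual[of d n] power2_norm_eq_inner[symmetric]
        divide_inverse power2_eq_square)
  ultimately show ?case by blast
qed

lemma gram_schmidt_orthogonal: "i \<noteq> k \<Longrightarrow> inner (gram_schmidt d i) (gram_schmidt d k) = 0"
  using gram_schmidt_orthonormal_upto by (metis inner_commute linorder_neqE_nat)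

lemma inner_gram_schmidt_self:
  "inner (gram_schmidt d n) (gram_schmidt d n) = (if gram_schmidt d n = 0 then 0 else 1)"
  using gram_schmidt_orthonormal_upto by blast

lemma norm_gram_schmidt_le: "norm (gram_schmidt d n) \<le> 1"
  using inner_gram_schmidt_self[of d n] by (simp add: norm_eq_sqrt_inner split: if_splits)

lemma gram_schmidt_coeff_self:
  "inner (d n) (gram_schmidt d n) *\<^sub>R gram_schmidt d n = gram_schmidt_residual d n"
proof (cases "gram_schmidt_residual d n = 0")
  case False
  have "inner (d n) (gram_schmidt d n) = inner (gram_schmidt_residual d n) (gram_schmidt d n)"
    by (simp add: gram_schmidt_residual_def inner_diff_left inner_sum_left gram_schmidt_orthogonal)
  also have "\<dots> = norm (gram_schmidt_residual d n)"
    using False by (simp add: gram_schmidt_eq_normalized_residual[of d n] dot_square_norm power2_eq_square)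
  finally show ?thesis
    using False by (simp add: gram_schmidt_eq_normalized_residual[of d n])
qed (simp add: gram_schmidt_eq_normalized_residual[of d n])

lemma gram_schmidt_expansion_self: "d n = (\<Sum>j\<le>n. inner (d n) (gram_schmidt d j) *\<^sub>R gram_schmidt d j)"
  by (simp add: lessThan_Suc_atMost[symmetric] gram_schmidt_coeff_self gram_schmidt_residual_def)

lemma gram_schmidt_coeff_eq_0:
  assumes "n < j"
  shows "inner (d n) (gram_schmidt d j) = 0"
  using assms
  by (subst gram_schmidt_expansion_self) (auto simp: inner_sum_left gram_schmidt_orthogonal intro!: sum.neutral)

lemma gram_schmidt_expansion:
  assumes "n \<le> N"
  shows "d n = (\<Sum>j\<le>N. inner (d n) (gram_schmidt d j) *\<^sub>R gram_schmidt d j)"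
proof -
  have "(\<Sum>j\<le>N. inner (d n) (gram_schmidt d j) *\<^sub>R gram_schmidt d j)
      = (\<Sum>j\<le>n. inner (d n) (gram_schmidt d j) *\<^sub>R gram_schmidt d j)"
    by (rule sum.mono_neutral_right) (use assms in \<open>auto simp: gram_schmidt_coeff_eq_0\<close>)
  then show ?thesis
    using gram_schmidt_expansion_self by metis
qed

lemma inner_eq_sum_gram_schmidt_coeffs:
  assumes "n \<le> N" "m \<le> N"
  shows "inner (d n) (d m) = (\<Sum>j\<le>N. inner (d n) (gram_schmidt d j) * inner (d m) (gram_schmidt d j))"
  by (subst gram_schmidt_expansion[OF assms(1)])
    (auto simp: inner_sum_left intro: sum.cong arg_cong[where f = "(*) _"] inner_commute)

lemma abs_gram_schmidt_coeff_le: "\<bar>inner (d n) (gram_schmidt d j)\<bar> \<le> norm (d n)"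
  using Cauchy_Schwarz_ineq2[of "d n" "gram_schmidt d j"] norm_gram_schmidt_le[of d j]
  by (smt (verit) mult_left_le norm_ge_zero)

lemma gram_schmidt_in_span: "gram_schmidt d n \<in> span (d ` {..n})"
proof (induction n rule: less_induct)
  case (less n)
  have "gram_schmidt d j \<in> span (d ` {..n})" if "j < n" for j
  proof -
    have "d ` {..j} \<subseteq> d ` {..n}"
      using that by auto
    then show ?thesis
      using less[OF that] span_mono by blast
  qed
  moreover have "d n \<in> span (d ` {..n})"
    by (simp add: span_base)
  ultimately have "gram_schmidt_residual d n \<in> span (d ` {..n})"
    unfolding gram_schmidt_residual_def by (intro span_diff span_sum span_scale) auto
  then show ?case
    unfolding gram_schmidt_eq_normalized_residual[of d n] by (rule span_scale)
qed

definition orthonormal_seq :: "(nat \<Rightarrow> 'v::real_inner) \<Rightarrow> bool" where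
  "orthonormal_seq e \<longleftrightarrow> (\<forall>i j. inner (e i) (e j) = (if i = j then 1 else 0))"

lemma orthonormal_seq_exists:
  fixes B :: "'v::real_inner set"
  assumes "infinite B" "independent B"
  obtains e :: "nat \<Rightarrow> 'v" where "orthonormal_seq e"
proof -
  obtain f :: "nat \<Rightarrow> 'v" where f: "inj f" "range f \<subseteq> B"
    using infinite_countable_subset assms(1) by blast
  have "gram_schmidt_residual f n \<noteq> 0" for n
  proof
    assume "gram_schmidt_residual f n = 0"
    then have "f n = (\<Sum>j<n. inner (f n) (gram_schmidt f j) *\<^sub>R gram_schmidt f j)"
      unfolding gram_schmidt_residual_def by simp
    also have "\<dots> \<in> span (f ` {..<n})"
    proof (intro span_sum span_scale)
      fix j assume "j \<in> {..<n}"
      then have "f ` {..j} \<subseteq> f ` {..<n}"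
        by auto
      then show "gram_schmidt f j \<in> span (f ` {..<n})"
        using gram_schmidt_in_span span_mono by blast
    qed
    also have "\<dots> \<subseteq> span (B - {f n})"
      using f by (intro span_mono) (auto simp: inj_eq)
    finally have "dependent B"
      unfolding dependent_def using f by auto
    then show False
      using assms(2) by simp
  qed
  then have "gram_schmidt f n \<noteq> 0" for n
    by (simp add: gram_schmidt_eq_normalized_residual[of f n])
  then have "orthonormal_seq (gram_schmidt f)"
    by (simp add: orthonormal_seq_def gram_schmidt_orthogonal inner_gram_schmidt_self)
  then show thesis
    using that by blast
qed

lemma inner_sum_orthonormal_seq:
  assumes "orthonormal_seq e"
  shows "inner (\<Sum>j\<le>N. a j *\<^sub>R e j) (\<Sum>k\<le>N. c k *\<^sub>R e k) = (\<Sum>j\<le>N. a j * c j)"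
proof -
  have e: "inner (e j) (e k) = (if j = k then 1 else 0)" for j k
    using assms unfolding orthonormal_seq_def by blast
  show ?thesis
    by (simp add: inner_sum_left inner_sum_right e if_distrib sum_distrib_left mult.commute
        cong: if_cong)
qed

section \<open>Orthogonal projection onto closed subspaces\<close>

lemma Cauchy_if_norm_diff_le_null_seq:
  fixes w :: "nat \<Rightarrow> 'v::real_normed_vector"
  assumes "\<And>m n. norm (w m - w n) \<le> b m + b n" and "b \<longlonglongrightarrow> 0"
  shows "Cauchy w"
proof (rule CauchyI)
  fix e :: real
  assume "0 < e"
  then have "\<forall>\<^sub>F n in sequentially. b n < e / 2"
    using assms(2) by (intro order_tendstoD) auto
  then obtain M where M: "\<And>n. n \<ge> M \<Longrightarrow> b n < e / 2"
    by (auto simp: eventually_sequentially)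
  have "norm (w m - w n) < e" if "m \<ge> M" "n \<ge> M" for m n
    using assms(1)[of m n] M[OF that(1)] M[OF that(2)] by linarith
  then show "\<exists>M. \<forall>m\<ge>M. \<forall>n\<ge>M. norm (w m - w n) < e"
    by blast
qed

lemma norm_diff_le_of_near_minimal_distance:
  fixes v a c :: "'v::real_inner"
  assumes "0 \<le> \<delta>" "\<delta> \<le> norm (v - (1/2) *\<^sub>R (a + c))"
    and "norm (v - a) \<le> \<delta> + s" "norm (v - c) \<le> \<delta> + t" "0 \<le> s" "0 \<le> t"
  shows "norm (a - c) \<le> sqrt (2 * s * (2 * \<delta> + s)) + sqrt (2 * t * (2 * \<delta> + t))"
proof -
  have "2 * \<delta> \<le> norm ((v - a) + (v - c))"
    using assms(2) norm_scaleR[of 2 "v - (1/2) *\<^sub>R (a + c)"] by (simp add: algebra_simps scaleR_2)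
  then have "(2 * \<delta>)\<^sup>2 \<le> (norm ((v - a) + (v - c)))\<^sup>2"
    using assms(1) by (intro power_mono) auto
  moreover have "(norm (v - a))\<^sup>2 \<le> (\<delta> + s)\<^sup>2" "(norm (v - c))\<^sup>2 \<le> (\<delta> + t)\<^sup>2"
    using assms(3,4) by (auto intro!: power_mono)
  moreover have "(norm (a - c))\<^sup>2 + (norm ((v - a) + (v - c)))\<^sup>2 = 2 * (norm (v - a))\<^sup>2 + 2 * (norm (v - c))\<^sup>2"
    by (simp add: power2_norm_eq_inner inner_add_left inner_add_right inner_diff_left inner_diff_right
        inner_commute)
  ultimately have "(norm (a - c))\<^sup>2 \<le> (sqrt (2 * s * (2 * \<delta> + s)))\<^sup>2 + (sqrt (2 * t * (2 * \<delta> + t)))\<^sup>2"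
    using assms(1,5,6) by (simp add: power2_eq_square algebra_simps)
  also have "\<dots> \<le> (sqrt (2 * s * (2 * \<delta> + s)) + sqrt (2 * t * (2 * \<delta> + t)))\<^sup>2"
    using assms(1,5,6) by (simp add: power2_sum)
  finally show ?thesis
    by (rule power2_le_imp_le) (use assms(1,5,6) in simp)
qed

text \<open>Minimizing sequences for the distance to v are Cauchy by the parallelogram law.\<close>

lemma closed_subspace_nearest_point_exists:
  fixes V :: "'v::{real_inner,complete_space} set"
  assumes "subspace V" "closed V"
  obtains p where "p \<in> V" "\<And>w. w \<in> V \<Longrightarrow> norm (v - p) \<le> norm (v - w)"
proof -
  define \<delta> where "\<delta> = infdist v V"
  define \<epsilon> :: "nat \<Rightarrow> real" where "\<epsilon> n = 1 / (real n + 1)" for n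
  have \<delta>: "0 \<le> \<delta>" "\<And>w. w \<in> V \<Longrightarrow> \<delta> \<le> norm (v - w)"
    using infdist_le[of _ V v] by (auto simp: \<delta>_def dist_norm infdist_nonneg)
  have "\<exists>w\<in>V. norm (v - w) < \<delta> + \<epsilon> n" for n
  proof -
    have V_ne: "V \<noteq> {}"
      using subspace_0[OF assms(1)] by auto
    then have "(INF w\<in>V. dist v w) < \<delta> + \<epsilon> n"
      by (simp add: \<delta>_def infdist_notempty \<epsilon>_def)
    then show ?thesis
      using V_ne by (subst (asm) cINF_less_iff) (auto simp: dist_norm intro: bdd_belowI[of _ 0])
  qed
  then obtain w where wV: "\<And>n. w n \<in> V" and w: "\<And>n. norm (v - w n) < \<delta> + \<epsilon> n"
    by metis
  have \<epsilon>: "\<epsilon> \<longlonglongrightarrow> 0" "\<And>n. 0 \<le> \<epsilon> n"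
    unfolding \<epsilon>_def using LIMSEQ_inverse_real_of_nat by (simp_all add: inverse_eq_divide add.commute)
  have "norm (w m - w n) \<le> sqrt (2 * \<epsilon> m * (2 * \<delta> + \<epsilon> m)) + sqrt (2 * \<epsilon> n * (2 * \<delta> + \<epsilon> n))"
    for m n
  proof (rule norm_diff_le_of_near_minimal_distance)
    show "\<delta> \<le> norm (v - (1/2) *\<^sub>R (w m + w n))"
      using wV assms(1) by (intro \<delta>(2) subspace_scale subspace_add) auto
  qed (use \<delta>(1) \<epsilon>(2) w less_imp_le in auto)
  moreover have "(\<lambda>n. sqrt (2 * \<epsilon> n * (2 * \<delta> + \<epsilon> n))) \<longlonglongrightarrow> 0"
    using tendsto_real_sqrt[OF tendsto_mult[OF tendsto_mult_right_zero[OF \<epsilon>(1)] tendsto_add[OF tendsto_const \<epsilon>(1)]]]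
    by simp
  ultimately have "Cauchy w"
    by (rule Cauchy_if_norm_diff_le_null_seq)
  then obtain p where lim: "w \<longlonglongrightarrow> p"
    by (auto simp: Cauchy_convergent_iff convergent_def)
  have "p \<in> V"
    using closed_sequentially[OF assms(2) _ lim] wV by blast
  have "norm (v - p) \<le> \<delta>"
  proof (rule tendsto_le[of sequentially])
    show "(\<lambda>n. \<delta> + \<epsilon> n) \<longlonglongrightarrow> \<delta>"
      using tendsto_add[OF tendsto_const \<epsilon>(1)] by simp
    show "(\<lambda>n. norm (v - w n)) \<longlonglongrightarrow> norm (v - p)"
      by (intro tendsto_intros lim)
    show "\<forall>\<^sub>F n in sequentially. norm (v - w n) \<le> \<delta> + \<epsilon> n"
      using w by (intro always_eventually allI less_imp_le)
  qed simp
  then have "norm (v - p) \<le> norm (v - w)" if "w \<in> V" for w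
    using \<delta>(2)[OF that] by linarith
  with \<open>p \<in> V\<close> show thesis
    by (rule that)
qed

lemma nearest_point_orthogonal:
  fixes V :: "'v::real_inner set"
  assumes "subspace V" "p \<in> V" "\<And>w. w \<in> V \<Longrightarrow> norm (v - p) \<le> norm (v - w)" "w \<in> V"
  shows "inner (v - p) w = 0"
proof (rule ccontr)
  define c where "c = inner (v - p) w"
  assume "inner (v - p) w \<noteq> 0"
  then have "c \<noteq> 0" "w \<noteq> 0"
    by (auto simp: c_def)
  then have W: "0 < inner w w"
    by simp
  define t where "t = c / inner w w"
  have "p + t *\<^sub>R w \<in> V"
    using assms(1,2,4) by (intro subspace_add subspace_scale)
  then have "(norm (v - p))\<^sup>2 \<le> (norm (v - (p + t *\<^sub>R w)))\<^sup>2"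
    using assms(3) by (intro power_mono) auto
  also have "\<dots> = (norm (v - p))\<^sup>2 - 2 * t * c + t\<^sup>2 * inner w w"
  proof -
    have "(norm (a - t *\<^sub>R w))\<^sup>2 = (norm a)\<^sup>2 - 2 * t * inner a w + t\<^sup>2 * inner w w" for a
      unfolding power2_norm_eq_inner by (simp add: inner_commute[of w a] power2_eq_square algebra_simps)
    from this[of "v - p"] show ?thesis
      by (simp add: c_def algebra_simps)
  qed
  also have "\<dots> = (norm (v - p))\<^sup>2 - c\<^sup>2 / inner w w"
    using W by (simp add: t_def power2_eq_square field_simps)
  finally show False
    using W \<open>c \<noteq> 0\<close> by (simp add: field_simps)
qed

locale hilbert_subspace =
  fixes V :: "'v::{real_inner,complete_space} set"
  assumes subspace: "subspace V" and closed: "closed V"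
begin

definition proj :: "'v \<Rightarrow> 'v" where
  "proj v = (SOME p. p \<in> V \<and> (\<forall>w\<in>V. inner (v - p) w = 0))"

lemma proj_in: "proj v \<in> V"
  and proj_orthogonal: "w \<in> V \<Longrightarrow> inner (v - proj v) w = 0"
proof -
  obtain p where "p \<in> V" "\<And>w. w \<in> V \<Longrightarrow> norm (v - p) \<le> norm (v - w)"
    using closed_subspace_nearest_point_exists[OF subspace closed] by blast
  then have "\<exists>p. p \<in> V \<and> (\<forall>w\<in>V. inner (v - p) w = 0)"
    using nearest_point_orthogonal[OF subspace] by blast
  then have "proj v \<in> V \<and> (\<forall>w\<in>V. inner (v - proj v) w = 0)"
    unfolding proj_def by (rule someI_ex)
  then show "proj v \<in> V" "w \<in> V \<Longrightarrow> inner (v - proj v) w = 0"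
    by auto
qed

lemma proj_unique:
  assumes "p \<in> V" "\<And>w. w \<in> V \<Longrightarrow> inner (v - p) w = 0"
  shows "proj v = p"
proof -
  have "p - proj v \<in> V"
    using assms(1) proj_in subspace by (rule subspace_diff[rotated 1])
  have "inner (p - proj v) (p - proj v) = inner (v - proj v) (p - proj v) - inner (v - p) (p - proj v)"
    by (simp add: inner_diff_left)
  also have "\<dots> = 0"
    using proj_orthogonal assms(2) \<open>p - proj v \<in> V\<close> by simp
  finally show ?thesis
    by simp
qed

lemma proj_id: "v \<in> V \<Longrightarrow> proj v = v"
  by (rule proj_unique) auto

lemma proj_of_orthogonal: "proj (v - proj v) = 0"
  by (rule proj_unique) (use proj_orthogonal subspace_0[OF subspace] in auto)

lemma linear_proj: "linear proj"
proof
  fix u v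
  show "proj (u + v) = proj u + proj v"
  proof (rule proj_unique)
    show "proj u + proj v \<in> V"
      using proj_in subspace by (simp add: subspace_add)
    have "u + v - (proj u + proj v) = (u - proj u) + (v - proj v)"
      by simp
    then show "inner (u + v - (proj u + proj v)) w = 0" if "w \<in> V" for w
      using proj_orthogonal[OF that] by (simp only: inner_add_left)
  qed
next
  fix c :: real and v
  show "proj (c *\<^sub>R v) = c *\<^sub>R proj v"
  proof (rule proj_unique)
    show "c *\<^sub>R proj v \<in> V"
      using proj_in subspace by (simp add: subspace_scale)
    have "c *\<^sub>R v - c *\<^sub>R proj v = c *\<^sub>R (v - proj v)"
      by (simp add: scaleR_diff_right)
    then show "inner (c *\<^sub>R v - c *\<^sub>R proj v) w = 0" if "w \<in> V" for w
      using proj_orthogonal[OF that] by (simp only: inner_scaleR_left)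
  qed
qed

lemma norm_proj_pythagoras: "(norm v)\<^sup>2 = (norm (proj v))\<^sup>2 + (norm (v - proj v))\<^sup>2"
  using norm_add_Pythagorean[of "proj v" "v - proj v"] proj_orthogonal[OF proj_in, of v]
  by (simp add: orthogonal_def inner_commute)

lemma norm_proj_le: "norm (proj v) \<le> norm v"
  and norm_proj_complement_le: "norm (v - proj v) \<le> norm v"
  using norm_proj_pythagoras[of v] by (auto intro: power2_le_imp_le)

end

section \<open>Almost minimizers and limits of Gram matrices\<close>

lemma convergent_if_geometric_steps:
  fixes p :: "nat \<Rightarrow> 'v::{real_normed_vector,complete_space}"
  assumes step: "\<And>k. norm (p (Suc k) - p k) \<le> a * q ^ k" and q: "0 \<le> q" "q < 1"
  shows "convergent p"
proof -
  define c where "c = a / (1 - q)"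
  have "0 \<le> a"
    using order_trans[OF norm_ge_zero step[of 0]] by simp
  then have c: "0 \<le> c"
    using q by (simp add: c_def)
  have dist: "norm (p m - p n) \<le> c * (q ^ n - q ^ m)" if "n \<le> m" for m n
    using that
  proof (induction m)
    case (Suc m)
    show ?case
    proof (cases "n = Suc m")
      case False
      then have "n \<le> m"
        using Suc.prems by simp
      have "norm (p (Suc m) - p n) \<le> norm (p (Suc m) - p m) + norm (p m - p n)"
        using norm_triangle_ineq[of "p (Suc m) - p m" "p m - p n"] by simp
      also have "\<dots> \<le> a * q ^ m + c * (q ^ n - q ^ m)"
        using step[of m] Suc.IH[OF \<open>n \<le> m\<close>] by simp
      also have "\<dots> = c * (q ^ n - q ^ Suc m)"
        using q by (simp add: c_def field_simps)
      finally show ?thesis .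
    qed simp
  qed simp
  have "norm (p m - p n) \<le> c * q ^ m + c * q ^ n" for m n
  proof -
    have "0 \<le> c * q ^ m" "0 \<le> c * q ^ n"
      using c q by simp_all
    then show ?thesis
      using dist[of n m] dist[of m n] norm_minus_commute[of "p m" "p n"]
      by (cases "n \<le> m") (simp_all add: algebra_simps)
  qed
  moreover have "(\<lambda>n. c * q ^ n) \<longlonglongrightarrow> 0"
    using q by (intro tendsto_mult_right_zero LIMSEQ_power_zero) auto
  ultimately have "Cauchy p"
    by (rule Cauchy_if_norm_diff_le_null_seq)
  then show ?thesis
    by (simp add: Cauchy_convergent_iff)
qed

text \<open>If no point were almost minimal on a large ball, following points of much smaller value
  would produce a geometrically convergent sequence on whose limit F would vanish.\<close>

lemma almost_minimizer_on_large_ball: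
  fixes F :: "'v::{real_normed_vector,complete_space} \<Rightarrow> real"
  assumes cont: "continuous_on UNIV F" and pos: "\<And>v. 0 < F v"
    and "0 < \<epsilon>" "\<epsilon> < 1" "0 < R"
  shows "\<exists>p. \<forall>w. norm (w - p) \<le> R * F p \<longrightarrow> (1 - \<epsilon>) * F p \<le> F w"
proof (rule ccontr)
  assume "\<not> ?thesis"
  then have "\<forall>p. \<exists>w. norm (w - p) \<le> R * F p \<and> F w < (1 - \<epsilon>) * F p"
    by (auto simp: not_le)
  then obtain next_pt where next_near: "\<And>p. norm (next_pt p - p) \<le> R * F p"
    and next_lower: "\<And>p. F (next_pt p) < (1 - \<epsilon>) * F p"
    by metis
  define q where "q = 1 - \<epsilon>"
  have q: "0 < q" "q < 1"
    using assms(3,4) by (auto simp: q_def)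
  define p where "p k = (next_pt ^^ k) 0" for k
  have F_p: "F (p k) \<le> q ^ k * F (p 0)" for k
  proof (induction k)
    case (Suc k)
    have "F (p (Suc k)) \<le> q * F (p k)"
      using next_lower[of "p k"] by (simp add: p_def q_def)
    also have "\<dots> \<le> q * (q ^ k * F (p 0))"
      using Suc q by (intro mult_left_mono) auto
    finally show ?case
      by simp
  qed simp
  have step: "norm (p (Suc k) - p k) \<le> (R * F (p 0)) * q ^ k" for k
  proof -
    have "norm (p (Suc k) - p k) \<le> R * F (p k)"
      using next_near[of "p k"] by (simp add: p_def)
    also have "\<dots> \<le> R * (q ^ k * F (p 0))"
      using F_p assms(5) by (intro mult_left_mono) auto
    finally show ?thesis
      by (simp add: mult_ac)
  qed
  have "convergent p"
    using q by (intro convergent_if_geometric_steps[OF step]) auto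
  then obtain l where "p \<longlonglongrightarrow> l"
    by (auto simp: convergent_def)
  then have "(\<lambda>k. F (p k)) \<longlonglongrightarrow> F l"
    using continuous_on_tendsto_compose[OF cont] by simp
  moreover have "(\<lambda>k. q ^ k * F (p 0)) \<longlonglongrightarrow> 0"
    using q by (intro tendsto_mult_left_zero LIMSEQ_power_zero) auto
  ultimately have "F l \<le> 0"
    using F_p by (intro LIMSEQ_le) auto
  then show False
    using pos[of l] by simp
qed

lemma diagonal_convergent_subseq:
  fixes c :: "nat \<Rightarrow> nat \<Rightarrow> real"
  assumes "\<And>k. bounded (range (\<lambda>n. c n k))"
  obtains r where "strict_mono r" "\<And>k. convergent (\<lambda>n. c (r n) k)"
proof -
  define P where "P k s \<longleftrightarrow> convergent (\<lambda>n. c (s n) k)" for k and s :: "nat \<Rightarrow> nat"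
  interpret subseqs P
  proof
    fix k and s :: "nat \<Rightarrow> nat"
    have "bounded (range (\<lambda>n. c (s n) k))"
      using assms[of k] by (rule bounded_subset) auto
    then obtain l r where "strict_mono r" "((\<lambda>n. c (s n) k) \<circ> r) \<longlonglongrightarrow> l"
      using bounded_imp_convergent_subsequence by blast
    then show "\<exists>r. strict_mono r \<and> P k (s \<circ> r)"
      unfolding P_def convergent_def by (auto simp: o_def)
  qed
  have "convergent (\<lambda>n. c (diagseq n) k)" for k
  proof -
    have "P k (diagseq \<circ> (+) (Suc k))"
      by (rule diagseq_holds) (auto simp: P_def o_def intro: convergent_subseq_convergent[unfolded o_def])
    then have "convergent (\<lambda>n. c (diagseq (n + Suc k)) k)"
      by (simp add: P_def o_def add.commute)
    then show ?thesis
      unfolding convergent_def using LIMSEQ_offset[where f = "\<lambda>n. c (diagseq n) k"] by blast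
  qed
  then show thesis
    using that subseq_diagseq by blast
qed

lemma tendsto_inner_of_gram_schmidt_coeffs:
  fixes d :: "nat \<Rightarrow> nat \<Rightarrow> 'v::real_inner" and e :: "nat \<Rightarrow> 'w::real_inner"
  assumes "orthonormal_seq e"
    and a: "\<And>i j. (\<lambda>n. inner (d n i) (gram_schmidt (d n) j)) \<longlonglongrightarrow> a i j"
  shows "(\<lambda>n. inner (d n i) (d n i')) \<longlonglongrightarrow> inner (\<Sum>j\<le>i. a i j *\<^sub>R e j) (\<Sum>j\<le>i'. a i' j *\<^sub>R e j)"
proof -
  define N where "N = max i i'"
  have a_upper: "a k j = 0" if "k < j" for k j
    using a[of k j] by (simp add: gram_schmidt_coeff_eq_0[OF that] LIMSEQ_const_iff)
  have Z: "(\<Sum>j\<le>k. a k j *\<^sub>R e j) = (\<Sum>j\<le>N. a k j *\<^sub>R e j)" if "k \<le> N" for k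
    by (rule sum.mono_neutral_left) (use that a_upper in auto)
  have "(\<lambda>n. \<Sum>j\<le>N. inner (d n i) (gram_schmidt (d n) j) * inner (d n i') (gram_schmidt (d n) j))
      \<longlonglongrightarrow> (\<Sum>j\<le>N. a i j * a i' j)"
    by (intro tendsto_intros a)
  moreover have "inner (\<Sum>j\<le>i. a i j *\<^sub>R e j) (\<Sum>j\<le>i'. a i' j *\<^sub>R e j) = (\<Sum>j\<le>N. a i j * a i' j)"
    using Z[of i] Z[of i'] inner_sum_orthonormal_seq[OF assms(1)] by (simp add: N_def)
  moreover have "inner (d n i) (d n i') =
      (\<Sum>j\<le>N. inner (d n i) (gram_schmidt (d n) j) * inner (d n i') (gram_schmidt (d n) j))" for n
    by (rule inner_eq_sum_gram_schmidt_coeffs) (auto simp: N_def)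
  ultimately show ?thesis
    by simp
qed

lemma gram_limit_realization:
  fixes u :: "nat \<Rightarrow> 'i \<Rightarrow> 'v::real_inner" and e :: "nat \<Rightarrow> 'w::real_inner"
  assumes "countable C" "C \<noteq> {}" "orthonormal_seq e"
    and bounded: "\<And>\<gamma>. \<gamma> \<in> C \<Longrightarrow> bounded (range (\<lambda>n. u n \<gamma>))"
  obtains r and z :: "'i \<Rightarrow> 'w" where "strict_mono r"
    "\<And>\<gamma> \<delta>. \<gamma> \<in> C \<Longrightarrow> \<delta> \<in> C \<Longrightarrow> (\<lambda>n. inner (u (r n) \<gamma>) (u (r n) \<delta>)) \<longlonglongrightarrow> inner (z \<gamma>) (z \<delta>)"
proof -
  define d where "d n i = u n (from_nat_into C i)" for n i
  \<comment> \<open>Gram--Schmidt coordinates of the enumerated vectors; index k encodes a pair (i, j)\<close>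
  define coord where "coord n k = inner (d n (fst (prod_decode k))) (gram_schmidt (d n) (snd (prod_decode k)))"
    for n k
  have "bounded (range (\<lambda>n. coord n k))" for k
  proof -
    obtain K where K: "\<And>n. norm (d n (fst (prod_decode k))) \<le> K"
      using bounded[OF from_nat_into[OF assms(2)]] by (auto simp: d_def bounded_iff)
    have "norm (coord n k) \<le> K" for n
      using order_trans[OF abs_gram_schmidt_coeff_le[of "d n" "fst (prod_decode k)"] K[of n]]
      by (simp add: coord_def)
    then show ?thesis
      unfolding bounded_iff by blast
  qed
  then obtain r where r: "strict_mono r" "\<And>k. convergent (\<lambda>n. coord (r n) k)"
    using diagonal_convergent_subseq[of coord] by blast
  define a where "a i j = lim (\<lambda>n. coord (r n) (prod_encode (i, j)))" for i j
  have "(\<lambda>n. inner (d (r n) i) (gram_schmidt (d (r n)) j)) \<longlonglongrightarrow> a i j" for i j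
    using r(2)[of "prod_encode (i, j)"] by (simp add: a_def coord_def convergent_LIMSEQ_iff)
  note Z_lim = tendsto_inner_of_gram_schmidt_coeffs[OF assms(3) this]
  define z where "z \<gamma> = (\<Sum>j\<le>to_nat_on C \<gamma>. a (to_nat_on C \<gamma>) j *\<^sub>R e j)" for \<gamma>
  have "(\<lambda>n. inner (u (r n) \<gamma>) (u (r n) \<delta>)) \<longlonglongrightarrow> inner (z \<gamma>) (z \<delta>)" if "\<gamma> \<in> C" "\<delta> \<in> C" for \<gamma> \<delta>
    using Z_lim[of "to_nat_on C \<gamma>" "to_nat_on C \<delta>"] that assms(1) by (simp add: d_def z_def)
  with r(1) show thesis
    by (rule that)
qed

section \<open>Continuous extension to the closure\<close>

lemma continuous_on_closure_eqI:
  fixes f g :: "'a::topological_space \<Rightarrow> 'b::real_normed_vector"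
  assumes "continuous_on (closure S) f" "continuous_on (closure S) g"
    and "\<And>x. x \<in> S \<Longrightarrow> f x = g x" "x \<in> closure S"
  shows "f x = g x"
  using continuous_constant_on_closure[of S "\<lambda>x. f x - g x" 0 x] assms
  by (simp add: continuous_on_diff)

lemma subspace_closure:
  fixes W :: "'a::real_normed_vector set"
  assumes "subspace W"
  shows "subspace (closure W)"
  unfolding subspace_def
proof (intro conjI ballI allI)
  show "0 \<in> closure W"
    using subspace_0[OF assms] closure_subset by blast
next
  fix v w
  assume "v \<in> closure W" "w \<in> closure W"
  have "(\<lambda>p. fst p + snd p) ` closure (W \<times> W) \<subseteq> closure W"
  proof (rule image_closure_subset)
    show "continuous_on (closure (W \<times> W)) (\<lambda>p. fst p + snd p)"
      by (intro continuous_intros)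
    show "(\<lambda>p. fst p + snd p) ` (W \<times> W) \<subseteq> closure W"
      using subspace_add[OF assms] closure_subset by fastforce
  qed simp
  then show "v + w \<in> closure W"
    using \<open>v \<in> closure W\<close> \<open>w \<in> closure W\<close> by (force simp: closure_Times)
next
  fix c :: real and v
  assume "v \<in> closure W"
  have "(\<lambda>v. c *\<^sub>R v) ` closure W \<subseteq> closure W"
  proof (rule image_closure_subset)
    show "continuous_on (closure W) (\<lambda>v. c *\<^sub>R v)"
      by (intro continuous_intros)
    show "(\<lambda>v. c *\<^sub>R v) ` W \<subseteq> closure W"
      using subspace_scale[OF assms] closure_subset by fastforce
  qed simp
  then show "c *\<^sub>R v \<in> closure W"
    using \<open>v \<in> closure W\<close> by blast
qed

definition closure_extension :: "'a::metric_space set \<Rightarrow> ('a \<Rightarrow> 'b::metric_space) \<Rightarrow> 'a \<Rightarrow> 'b" where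
  "closure_extension W T = (SOME T'. continuous_on (closure W) T' \<and> (\<forall>v\<in>W. T' v = T v))"

lemma lipschitz_closure_extension:
  fixes T :: "'a::metric_space \<Rightarrow> 'b::complete_space"
  assumes "K-lipschitz_on W T"
  shows continuous_on_closure_extension: "continuous_on (closure W) (closure_extension W T)"
    and closure_extension_eq: "v \<in> W \<Longrightarrow> closure_extension W T v = T v"
proof -
  obtain T' where "K-lipschitz_on (closure W) T'" "\<forall>v\<in>W. T' v = T v"
    using lipschitz_extend_closure[OF assms] by blast
  then have "\<exists>T'. continuous_on (closure W) T' \<and> (\<forall>v\<in>W. T' v = T v)"
    using lipschitz_on_continuous_on by blast
  then have "continuous_on (closure W) (closure_extension W T) \<and> (\<forall>v\<in>W. closure_extension W T v = T v)"
    unfolding closure_extension_def by (rule someI_ex)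
  then show "continuous_on (closure W) (closure_extension W T)" "v \<in> W \<Longrightarrow> closure_extension W T v = T v"
    by auto
qed

lemma additive_on_closure:
  fixes f :: "'a::real_normed_vector \<Rightarrow> 'b::real_normed_vector"
  assumes W: "subspace W" and cont: "continuous_on (closure W) f"
    and add: "\<And>v w. v \<in> W \<Longrightarrow> w \<in> W \<Longrightarrow> f (v + w) = f v + f w"
    and "v \<in> closure W" "w \<in> closure W"
  shows "f (v + w) = f v + f w"
proof -
  have "(\<lambda>p. f (fst p + snd p)) (v, w) = (\<lambda>p. f (fst p) + f (snd p)) (v, w)"
  proof (rule continuous_on_closure_eqI[of "W \<times> W"])
    show "continuous_on (closure (W \<times> W)) (\<lambda>p. f (fst p + snd p))"
    proof (rule continuous_on_compose2[OF cont])
      show "continuous_on (closure (W \<times> W)) (\<lambda>p. fst p + snd p)"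
        by (intro continuous_intros)
      show "(\<lambda>p. fst p + snd p) ` closure (W \<times> W) \<subseteq> closure W"
        using subspace_add[OF subspace_closure[OF W]] by (force simp: closure_Times)
    qed
    show "continuous_on (closure (W \<times> W)) (\<lambda>p. f (fst p) + f (snd p))"
      unfolding closure_Times by (intro continuous_intros continuous_on_compose2[OF cont]) auto
  qed (use assms in \<open>auto simp: closure_Times\<close>)
  then show ?thesis
    by simp
qed

lemma homogeneous_on_closure:
  fixes f :: "'a::real_normed_vector \<Rightarrow> 'b::real_normed_vector"
  assumes W: "subspace W" and cont: "continuous_on (closure W) f"
    and scale: "\<And>v. v \<in> W \<Longrightarrow> f (c *\<^sub>R v) = c *\<^sub>R f v"
    and "v \<in> closure W"
  shows "f (c *\<^sub>R v) = c *\<^sub>R f v"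
proof (rule continuous_on_closure_eqI[where f = "\<lambda>v. f (c *\<^sub>R v)"])
  show "continuous_on (closure W) (\<lambda>v. f (c *\<^sub>R v))"
  proof (rule continuous_on_compose2[OF cont])
    show "(\<lambda>v. c *\<^sub>R v) ` closure W \<subseteq> closure W"
      using subspace_scale[OF subspace_closure[OF W]] by blast
  qed (intro continuous_intros)
  show "continuous_on (closure W) (\<lambda>v. c *\<^sub>R f v)"
    by (intro continuous_intros cont)
qed (use assms in auto)

lemma bounded_linear_closure_extension:
  fixes T :: "'a::real_normed_vector \<Rightarrow> 'b::{real_normed_vector,complete_space}"
  assumes W: "subspace W" and "0 \<le> K"
    and add: "\<And>v w. v \<in> W \<Longrightarrow> w \<in> W \<Longrightarrow> T (v + w) = T v + T w"
    and scale: "\<And>c v. v \<in> W \<Longrightarrow> T (c *\<^sub>R v) = c *\<^sub>R T v"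
    and bound: "\<And>v. v \<in> W \<Longrightarrow> norm (T v) \<le> K * norm v"
  defines "T' \<equiv> closure_extension W T"
  shows "continuous_on (closure W) T'" "\<And>v. v \<in> W \<Longrightarrow> T' v = T v"
    and "\<And>v w. v \<in> closure W \<Longrightarrow> w \<in> closure W \<Longrightarrow> T' (v + w) = T' v + T' w"
    and "\<And>c v. v \<in> closure W \<Longrightarrow> T' (c *\<^sub>R v) = c *\<^sub>R T' v"
    and "\<And>v. v \<in> closure W \<Longrightarrow> norm (T' v) \<le> K * norm v"
proof -
  have diff: "T v - T w = T (v - w)" if "v \<in> W" "w \<in> W" for v w
    using add[OF that(1) subspace_scale[OF W that(2), of "-1"]] scale[OF that(2), of "-1"] by simp
  have "K-lipschitz_on W T"
    by (rule lipschitz_onI) (use \<open>0 \<le> K\<close> in \<open>auto simp: dist_norm diff bound subspace_diff[OF W]\<close>)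
  note ext = lipschitz_closure_extension[OF this, folded T'_def]
  show cont: "continuous_on (closure W) T'" and eq: "\<And>v. v \<in> W \<Longrightarrow> T' v = T v"
    by (fact ext)+
  show "T' (v + w) = T' v + T' w" if "v \<in> closure W" "w \<in> closure W" for v w
    using additive_on_closure[OF W cont _ that] by (simp add: eq add subspace_add[OF W])
  show "T' (c *\<^sub>R v) = c *\<^sub>R T' v" if "v \<in> closure W" for c v
    using homogeneous_on_closure[OF W cont _ that] by (simp add: eq scale subspace_scale[OF W])
  show "norm (T' v) \<le> K * norm v" if "v \<in> closure W" for v
  proof -
    have "continuous_on (closure W) (\<lambda>v. norm (T' v) - K * norm v)"
      by (intro continuous_intros cont)
    then have "norm (T' v) - K * norm v \<le> 0"
      by (rule continuous_le_on_closure) (use that in \<open>auto simp: eq bound\<close>)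
    then show ?thesis
      by simp
  qed
qed

section \<open>Affine actions, word length and local energy\<close>

lemma affine_action_one:
  assumes "affine_action G A b"
  shows "b \<one>\<^bsub>G\<^esub> = 0" "blinfun_apply (A \<one>\<^bsub>G\<^esub>) v = v"
proof -
  have one: "blinfun_apply (A \<one>\<^bsub>G\<^esub>) v + b \<one>\<^bsub>G\<^esub> = v" for v
    using assms unfolding affine_action_def aff_def by auto
  from one[of 0] show "b \<one>\<^bsub>G\<^esub> = 0"
    by simp
  with one show "blinfun_apply (A \<one>\<^bsub>G\<^esub>) v = v"
    by simp
qed

lemma affine_action_mult:
  assumes "affine_action G A b" "g \<in> carrier G" "h \<in> carrier G"
  shows "b (g \<otimes>\<^bsub>G\<^esub> h) = blinfun_apply (A g) (b h) + b g"
    and "blinfun_apply (A (g \<otimes>\<^bsub>G\<^esub> h)) v = blinfun_apply (A g) (blinfun_apply (A h) v)"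
proof -
  have mult: "blinfun_apply (A (g \<otimes>\<^bsub>G\<^esub> h)) v + b (g \<otimes>\<^bsub>G\<^esub> h)
      = blinfun_apply (A g) (blinfun_apply (A h) v) + blinfun_apply (A g) (b h) + b g" for v
    using assms unfolding affine_action_def aff_def by (auto simp: blinfun.add_right)
  from mult[of 0] show b: "b (g \<otimes>\<^bsub>G\<^esub> h) = blinfun_apply (A g) (b h) + b g"
    by simp
  from mult[of v] show "blinfun_apply (A (g \<otimes>\<^bsub>G\<^esub> h)) v = blinfun_apply (A g) (blinfun_apply (A h) v)"
    unfolding b by (simp add: add.assoc)
qed

lemma (in group) affine_action_linear_inv:
  assumes "affine_action G A b" "g \<in> carrier G"
  shows "blinfun_apply (A (inv g)) (blinfun_apply (A g) v) = v"
  using affine_action_mult(2)[OF assms(1) _ assms(2), of "inv g" v] affine_action_one(2)[OF assms(1)]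
    assms(2) by simp

lemma (in group) one_le_norm_mult_norm_inv:
  fixes A :: "'a \<Rightarrow> ('v::real_normed_vector \<Rightarrow>\<^sub>L 'v)"
  assumes "affine_action G A b" "g \<in> carrier G" "(v :: 'v) \<noteq> 0"
  shows "1 \<le> norm (A g) * norm (A (inv g))"
proof -
  have "norm v = norm (blinfun_apply (A g) (blinfun_apply (A (inv g)) v))"
    using affine_action_linear_inv[OF assms(1), of "inv g"] assms(2) by simp
  also have "\<dots> \<le> norm (A g) * norm (blinfun_apply (A (inv g)) v)"
    by (rule norm_blinfun)
  also have "\<dots> \<le> norm (A g) * (norm (A (inv g)) * norm v)"
    by (intro mult_left_mono norm_blinfun) simp
  finally have "1 * norm v \<le> (norm (A g) * norm (A (inv g))) * norm v"
    by (simp add: mult.assoc)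
  then show ?thesis
    using assms(3) by (simp only: mult_le_cancel_right) simp
qed

lemma (in monoid) foldr_mult_closed: "set ws \<subseteq> carrier G \<Longrightarrow> foldr (\<otimes>) ws \<one> \<in> carrier G"
  by (induction ws) auto

lemma (in monoid) foldr_mult_append:
  assumes "set ws \<subseteq> carrier G" "set vs \<subseteq> carrier G"
  shows "foldr (\<otimes>) (ws @ vs) \<one> = foldr (\<otimes>) ws \<one> \<otimes> foldr (\<otimes>) vs \<one>"
  using assms by (induction ws) (auto simp: m_assoc foldr_mult_closed)

lemma (in group) foldr_mult_rev_inv:
  assumes "set ws \<subseteq> carrier G"
  shows "foldr (\<otimes>) (rev (map (\<lambda>y. inv y) ws)) \<one> = inv (foldr (\<otimes>) ws \<one>)"
  using assms
proof (induction ws)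
  case (Cons a ws)
  have "foldr (\<otimes>) (rev (map (\<lambda>y. inv y) (a # ws))) \<one>
      = foldr (\<otimes>) (rev (map (\<lambda>y. inv y) ws) @ [inv a]) \<one>"
    by simp
  also have "\<dots> = foldr (\<otimes>) (rev (map (\<lambda>y. inv y) ws)) \<one> \<otimes> foldr (\<otimes>) [inv a] \<one>"
    using Cons.prems by (intro foldr_mult_append) auto
  also have "\<dots> = inv (foldr (\<otimes>) ws \<one>) \<otimes> inv a"
    using Cons by simp
  also have "\<dots> = inv (a \<otimes> foldr (\<otimes>) ws \<one>)"
    using Cons.prems by (simp add: inv_mult_group foldr_mult_closed)
  finally show ?case
    by simp
qed simp

lemma (in group) word_length_inv:
  assumes "S \<subseteq> carrier G" "\<forall>s\<in>S. inv s \<in> S" "g \<in> carrier G"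
  shows "word_length G S (inv g) = word_length G S g"
proof -
  have inv_word: "\<exists>ws. length ws = n \<and> set ws \<subseteq> S \<and> foldr (\<otimes>) ws \<one> = inv h"
    if "\<exists>ws. length ws = n \<and> set ws \<subseteq> S \<and> foldr (\<otimes>) ws \<one> = h" for h n
  proof -
    from that obtain ws where "length ws = n" "set ws \<subseteq> S" "foldr (\<otimes>) ws \<one> = h"
      by blast
    then show ?thesis
      using assms(1,2) foldr_mult_rev_inv[of ws] by (intro exI[of _ "rev (map (\<lambda>y. inv y) ws)"]) auto
  qed
  have "(\<exists>ws. length ws = n \<and> set ws \<subseteq> S \<and> foldr (\<otimes>) ws \<one> = inv g)
      \<longleftrightarrow> (\<exists>ws. length ws = n \<and> set ws \<subseteq> S \<and> foldr (\<otimes>) ws \<one> = g)" for n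
    using inv_word[where h = g and n = n] inv_word[where h = "inv g" and n = n] assms(3) by auto
  then show ?thesis
    unfolding word_length_def by simp
qed

lemma (in group) generate_subset_words:
  assumes "S \<subseteq> carrier G" "\<forall>s\<in>S. inv s \<in> S"
  shows "generate G S \<subseteq> (\<lambda>ws. foldr (\<otimes>) ws \<one>) ` lists S"
proof
  fix h
  assume "h \<in> generate G S"
  then show "h \<in> (\<lambda>ws. foldr (\<otimes>) ws \<one>) ` lists S"
  proof induction
    case one
    then show ?case
      by (auto intro!: image_eqI[of _ _ "[]"])
  next
    case (incl h)
    then show ?case
      using assms by (auto intro!: image_eqI[of _ _ "[h]"])
  next
    case (inv h)
    then show ?case
      using assms by (auto intro!: image_eqI[of _ _ "[inv h]"])
  next
    case (eng h1 h2)
    then obtain ws1 ws2 where "ws1 \<in> lists S" "ws2 \<in> lists S"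
      "h1 = foldr (\<otimes>) ws1 \<one>" "h2 = foldr (\<otimes>) ws2 \<one>"
      by auto
    moreover have "foldr (\<otimes>) (ws1 @ ws2) \<one> = foldr (\<otimes>) ws1 \<one> \<otimes> foldr (\<otimes>) ws2 \<one>"
      using calculation assms(1) by (intro foldr_mult_append) auto
    ultimately show ?case
      by (auto intro!: image_eqI[of _ _ "ws1 @ ws2"])
  qed
qed

lemma (in group) countable_generate:
  assumes "finite S" "S \<subseteq> carrier G" "\<forall>s\<in>S. inv s \<in> S"
  shows "countable (generate G S)"
  using generate_subset_words[OF assms(2,3)] countable_subset assms(1)
  by (metis countable_finite countable_image countable_lists)

text \<open>On a nonzero space norm (A g) * norm (A (inv g)) \<ge> 1, so the growth bound at g is at least 1;
  this absorbs the factor max 1 coming from the identity on the orthogonal complement.\<close>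

lemma (in group) linear_growth_bound_max_1:
  fixes A :: "'a \<Rightarrow> ('v::real_normed_vector \<Rightarrow>\<^sub>L 'v)" and A' :: "'a \<Rightarrow> ('w::real_normed_vector \<Rightarrow>\<^sub>L 'w)"
  assumes "affine_action G A b" "S \<subseteq> carrier G" "\<forall>s\<in>S. inv s \<in> S" "(v :: 'v) \<noteq> 0"
    and "\<And>g. g \<in> carrier G \<Longrightarrow> norm (A' g) \<le> max 1 (norm (A g))"
    and "linear_growth_bound G S A C \<sigma>"
  shows "linear_growth_bound G S A' C \<sigma>"
  unfolding linear_growth_bound_def
proof (intro ballI impI)
  fix g
  assume g: "g \<in> carrier G" "g \<noteq> \<one>"
  let ?B = "C * real (word_length G S g) powr \<sigma>"
  have "inv g \<in> carrier G" "inv g \<noteq> \<one>"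
    using g by auto
  then have "norm (A (inv g)) \<le> C * real (word_length G S (inv g)) powr \<sigma>"
    using assms(6) unfolding linear_growth_bound_def by blast
  moreover have "norm (A g) \<le> ?B"
    using assms(6) g unfolding linear_growth_bound_def by blast
  ultimately have A_le: "norm (A g) \<le> ?B" "norm (A (inv g)) \<le> ?B"
    by (simp_all add: word_length_inv[OF assms(2,3) g(1)])
  have B_nonneg: "0 \<le> ?B"
    using A_le(1) norm_ge_zero[of "A g"] by linarith
  have "1 \<le> norm (A g) * norm (A (inv g))"
    by (rule one_le_norm_mult_norm_inv[OF assms(1) g(1) assms(4)])
  also have "\<dots> \<le> ?B * ?B"
    using A_le B_nonneg by (intro mult_mono) simp_all
  finally have "1\<^sup>2 \<le> ?B\<^sup>2"
    by (simp add: power2_eq_square)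
  then have "1 \<le> ?B"
    by (rule power2_le_imp_le[OF _ B_nonneg])
  then have "max 1 (norm (A g)) \<le> ?B"
    using A_le(1) by simp
  then show "norm (A' g) \<le> ?B"
    using assms(5)[OF g(1)] by linarith
qed

definition orbit_energy ::
  "('g, 'c) monoid_scheme \<Rightarrow> 'g set \<Rightarrow> 'g \<Rightarrow> ('g \<Rightarrow> 'v \<Rightarrow> 'v::real_normed_vector) \<Rightarrow> 'v \<Rightarrow> real" where
  "orbit_energy G S x \<rho> v = local_energy G S (\<lambda>y. \<rho> y v) x"

lemma orbit_energy_scaled:
  assumes "\<And>s. s \<in> S \<Longrightarrow> norm (\<rho> x v - \<rho> (x \<otimes>\<^bsub>G\<^esub> s) v) = c * norm (\<rho>' x w - \<rho>' (x \<otimes>\<^bsub>G\<^esub> s) w)"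
  shows "orbit_energy G S x \<rho> v = c\<^sup>2 * orbit_energy G S x \<rho>' w"
  unfolding orbit_energy_def local_energy_def
  by (simp add: assms power_mult_distrib sum_distrib_left[symmetric] cong: sum.cong)

lemma local_energy_nonneg: "0 \<le> local_energy G S f x"
  unfolding local_energy_def by (intro mult_nonneg_nonneg sum_nonneg) auto

lemma equivariant_orbit_map:
  assumes "affine_action G A b"
  shows "equivariant G (aff A b) (\<lambda>y. aff A b y v)"
  using assms unfolding equivariant_def affine_action_def by auto

lemma (in group) equivariant_eq_orbit_map:
  assumes "equivariant G \<rho> f" "y \<in> carrier G"
  shows "f y = \<rho> y (f \<one>)"
proof -
  have "f (y \<otimes> \<one>) = \<rho> y (f \<one>)"
    using assms unfolding equivariant_def by blast
  then show ?thesis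
    using assms(2) by simp
qed

lemma (in group) local_energy_equivariant:
  assumes "equivariant G \<rho> f" "x \<in> carrier G" "S \<subseteq> carrier G"
  shows "local_energy G S f x = orbit_energy G S x \<rho> (f \<one>)"
proof -
  have "f (x \<otimes> s) = \<rho> (x \<otimes> s) (f \<one>)" if "s \<in> S" for s
    using that assms by (intro equivariant_eq_orbit_map) auto
  then show ?thesis
    using equivariant_eq_orbit_map[OF assms(1,2)] by (simp add: orbit_energy_def local_energy_def)
qed

lemma (in group) orbit_energy_eq_0_imp_fixed:
  assumes act: "affine_action G A b" and "finite S" "S \<subseteq> carrier G" "generate G S = carrier G"
    and "x \<in> carrier G" "orbit_energy G S x (aff A b) v = 0" "g \<in> carrier G"
  shows "aff A b g v = v"
proof -
  have mult: "aff A b (h \<otimes> k) w = aff A b h (aff A b k w)" if "h \<in> carrier G" "k \<in> carrier G" for h k w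
    using act that unfolding affine_action_def by blast
  have one: "aff A b \<one> w = w" for w
    using act unfolding affine_action_def by blast
  have "(\<Sum>s\<in>S. (norm (aff A b x v - aff A b (x \<otimes> s) v))\<^sup>2) = 0"
    using assms(2,6) by (cases "S = {}") (auto simp: orbit_energy_def local_energy_def)
  then have same: "aff A b x v = aff A b (x \<otimes> s) v" if "s \<in> S" for s
    using assms(2) that by (simp add: sum_nonneg_eq_0_iff)
  have undo: "aff A b (inv h) (aff A b h w) = w" if "h \<in> carrier G" for h w
    using mult[of "inv h" h w] one that by simp
  have fixed_by_S: "aff A b s v = v" if "s \<in> S" for s
  proof -
    have "aff A b s v = aff A b (inv x) (aff A b (x \<otimes> s) v)"
      using mult[of x s v] undo[of x] that assms(3,5) by auto
    also have "\<dots> = v"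
      using same[OF that, symmetric] undo[of x] assms(5) by simp
    finally show ?thesis .
  qed
  have "aff A b h v = v" if "h \<in> generate G S" for h
    using that
  proof induction
    case (inv h)
    then show ?case
      using fixed_by_S[of h] undo[of h v] assms(3) by auto
  next
    case (eng h k)
    then show ?case
      using mult[of h k v] generate_in_carrier[OF assms(3)] by auto
  qed (use one fixed_by_S in auto)
  then show ?thesis
    using assms(4,7) by simp
qed

section \<open>Energy of a fixed-point-free action\<close>

locale fixed_point_free_action = group G for G :: "('g, 'c) monoid_scheme" (structure) +
  fixes S :: "'g set"
    and A :: "'g \<Rightarrow> ('a::{real_inner,complete_space} \<Rightarrow>\<^sub>L 'a)" and b :: "'g \<Rightarrow> 'a"
    and x :: 'g
  assumes finite_S: "finite S" and S_carrier: "S \<subseteq> carrier G"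
    and S_inv: "\<forall>s\<in>S. inv s \<in> S" and generate_S: "generate G S = carrier G"
    and action: "affine_action G A b" and no_fixed_point: "\<not> has_fixed_point G (aff A b)"
    and x_carrier: "x \<in> carrier G"
begin

abbreviation \<rho> :: "'g \<Rightarrow> 'a \<Rightarrow> 'a" where
  "\<rho> \<equiv> aff A b"

lemma \<rho>_mult: "g \<in> carrier G \<Longrightarrow> h \<in> carrier G \<Longrightarrow> \<rho> (g \<otimes> h) v = \<rho> g (\<rho> h v)"
  using action unfolding affine_action_def by blast

lemma \<rho>_diff: "\<rho> g u - \<rho> g v = blinfun_apply (A g) (u - v)"
  by (simp add: aff_def blinfun.diff_right)

lemma nonzero_vector_exists: "\<exists>v :: 'a. v \<noteq> 0"
proof (rule ccontr)
  assume "\<nexists>v :: 'a. v \<noteq> 0"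
  then have "\<forall>g\<in>carrier G. \<rho> g 0 = 0"
    by blast
  then show False
    using no_fixed_point unfolding has_fixed_point_def by blast
qed

lemma countable_carrier: "countable (carrier G)"
  using countable_generate[OF finite_S S_carrier S_inv] generate_S by simp

definition energy :: "'a \<Rightarrow> real" where
  "energy = orbit_energy G S x \<rho>"

definition root_energy :: "'a \<Rightarrow> real" where
  "root_energy v = sqrt (energy v)"

lemma energy_pos: "0 < energy v"
proof -
  have "energy v \<noteq> 0"
  proof
    assume "energy v = 0"
    then have "\<rho> g v = v" if "g \<in> carrier G" for g
      using orbit_energy_eq_0_imp_fixed[OF action finite_S S_carrier generate_S x_carrier _ that]
      by (simp add: energy_def)
    then show False
      using no_fixed_point unfolding has_fixed_point_def by blast
  qed
  moreover have "0 \<le> energy v"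
    by (simp add: energy_def orbit_energy_def local_energy_nonneg)
  ultimately show ?thesis
    by simp
qed

lemma root_energy_pos: "0 < root_energy v"
  by (simp add: root_energy_def energy_pos)

lemma root_energy_squared: "(root_energy v)\<^sup>2 = energy v"
  using energy_pos[of v] by (simp add: root_energy_def)

lemma continuous_on_root_energy: "continuous_on UNIV root_energy"
  unfolding root_energy_def energy_def orbit_energy_def local_energy_def aff_def
  by (intro continuous_intros)

lemma norm_orbit_step_le:
  assumes "s \<in> S"
  shows "norm (\<rho> (x \<otimes> s) p - \<rho> x p) \<le> sqrt (2 * real (card S)) * root_energy p"
proof -
  have "(norm (\<rho> x p - \<rho> (x \<otimes> s) p))\<^sup>2 \<le> (\<Sum>t\<in>S. (norm (\<rho> x p - \<rho> (x \<otimes> t) p))\<^sup>2)"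
    using assms finite_S by (intro member_le_sum) auto
  also have "\<dots> = (sqrt (2 * real (card S)) * root_energy p)\<^sup>2"
    using assms finite_S card_gt_0_iff[of S]
    by (auto simp: root_energy_squared power_mult_distrib energy_def orbit_energy_def local_energy_def)
  finally show ?thesis
    by (subst norm_minus_commute, rule power2_le_imp_le) (simp_all add: root_energy_pos less_imp_le)
qed

definition displacement :: "'a \<Rightarrow> 'g \<Rightarrow> 'a" where
  "displacement p g = \<rho> g p - p"

lemma displacement_mult:
  "g \<in> carrier G \<Longrightarrow> h \<in> carrier G \<Longrightarrow>
    displacement p (g \<otimes> h) = blinfun_apply (A g) (displacement p h) + displacement p g"
  unfolding displacement_def using \<rho>_mult \<rho>_diff by (simp add: algebra_simps)

lemma norm_displacement_generator_le:
  assumes "s \<in> S"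
  shows "norm (displacement p s) \<le> norm (A (inv x)) * (sqrt (2 * real (card S)) * root_energy p)"
proof -
  have "\<rho> (x \<otimes> s) p - \<rho> x p = blinfun_apply (A x) (displacement p s)"
    using assms S_carrier x_carrier by (auto simp: \<rho>_mult \<rho>_diff displacement_def)
  then have "displacement p s = blinfun_apply (A (inv x)) (\<rho> (x \<otimes> s) p - \<rho> x p)"
    using affine_action_linear_inv[OF action x_carrier] by simp
  then have "norm (displacement p s) \<le> norm (A (inv x)) * norm (\<rho> (x \<otimes> s) p - \<rho> x p)"
    by (simp add: norm_blinfun)
  also have "\<dots> \<le> norm (A (inv x)) * (sqrt (2 * real (card S)) * root_energy p)"
    by (intro mult_left_mono norm_orbit_step_le assms) simp
  finally show ?thesis .
qed

lemma displacement_le_root_energy: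
  assumes "g \<in> carrier G"
  obtains K where "\<And>p. norm (displacement p g) \<le> K * root_energy p"
proof -
  have "g \<in> generate G S"
    using assms generate_S by simp
  then have "\<exists>K. \<forall>p. norm (displacement p g) \<le> K * root_energy p"
  proof induction
    case one
    have "displacement p \<one> = 0" for p
      by (simp add: displacement_def aff_def affine_action_one[OF action])
    then show ?case
      by (intro exI[of _ 0]) simp
  next
    case (incl s)
    then show ?case
      using norm_displacement_generator_le
      by (intro exI[of _ "norm (A (inv x)) * sqrt (2 * real (card S))"]) (simp add: mult.assoc)
  next
    case (inv s)
    then show ?case
      using norm_displacement_generator_le S_inv
      by (intro exI[of _ "norm (A (inv x)) * sqrt (2 * real (card S))"]) (simp add: mult.assoc)
  next
    case (eng h k)
    then obtain K1 K2 where K1: "\<And>p. norm (displacement p h) \<le> K1 * root_energy p"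
      and K2: "\<And>p. norm (displacement p k) \<le> K2 * root_energy p"
      by blast
    have "norm (displacement p (h \<otimes> k)) \<le> (norm (A h) * K2 + K1) * root_energy p" for p
    proof -
      have "norm (displacement p (h \<otimes> k))
          \<le> norm (blinfun_apply (A h) (displacement p k)) + norm (displacement p h)"
        using eng.hyps generate_S by (simp add: displacement_mult norm_triangle_ineq)
      also have "\<dots> \<le> norm (A h) * (K2 * root_energy p) + K1 * root_energy p"
        using norm_blinfun[of "A h" "displacement p k"] K1[of p]
          mult_left_mono[OF K2[of p] norm_ge_zero[of "A h"]] by linarith
      finally show ?thesis
        by (simp add: algebra_simps)
    qed
    then show ?case
      by blast
  qed
  then show thesis
    using that by blast
qed

definition rescaled_displacement :: "'a \<Rightarrow> 'g \<Rightarrow> 'a" where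
  "rescaled_displacement p g = (1 / root_energy p) *\<^sub>R displacement p g"

lemma bounded_rescaled_displacement:
  assumes "g \<in> carrier G"
  shows "bounded (range (\<lambda>n. rescaled_displacement (p n) g))"
proof -
  obtain K where K: "\<And>p. norm (displacement p g) \<le> K * root_energy p"
    using displacement_le_root_energy[OF assms] by blast
  have "norm (rescaled_displacement q g) \<le> K" for q
    using K[of q] root_energy_pos[of q] by (simp add: rescaled_displacement_def field_simps)
  then show ?thesis
    unfolding bounded_iff by blast
qed

lemma rescaled_displacement_mult:
  "g \<in> carrier G \<Longrightarrow> h \<in> carrier G \<Longrightarrow>
    rescaled_displacement p (g \<otimes> h) = blinfun_apply (A g) (rescaled_displacement p h) + rescaled_displacement p g"
  by (simp add: rescaled_displacement_def displacement_mult blinfun.scaleR_right scaleR_add_right)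

lemma rescaled_displacement_one: "rescaled_displacement p \<one> = 0"
  by (simp add: rescaled_displacement_def displacement_def aff_def affine_action_one[OF action])

lemma \<rho>_rescaled: "\<rho> g (q + root_energy q *\<^sub>R w) = q + root_energy q *\<^sub>R aff A (rescaled_displacement q) g w"
  using root_energy_pos[of q]
  by (simp add: aff_def rescaled_displacement_def displacement_def blinfun.add_right blinfun.scaleR_right
      algebra_simps)

lemma energy_rescaled:
  "energy (q + root_energy q *\<^sub>R w) = (root_energy q)\<^sup>2 * orbit_energy G S x (aff A (rescaled_displacement q)) w"
  unfolding energy_def
  by (rule orbit_energy_scaled) (simp add: \<rho>_rescaled root_energy_pos less_imp_le flip: scaleR_diff_right)

lemma orbit_energy_rescaled_zero: "orbit_energy G S x (aff A (rescaled_displacement q)) 0 = 1"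
  using energy_rescaled[of q 0] root_energy_squared[of q] energy_pos[of q] by simp

lemma almost_minimizers_exist:
  "\<exists>p. \<forall>n w. norm (w - p n) \<le> (real n + 1) * root_energy (p n) \<longrightarrow>
      (1 - 1 / (real n + 2)) * root_energy (p n) \<le> root_energy w"
proof -
  have "\<exists>q. \<forall>w. norm (w - q) \<le> (real n + 1) * root_energy q \<longrightarrow>
      (1 - 1 / (real n + 2)) * root_energy q \<le> root_energy w" for n
    by (rule almost_minimizer_on_large_ball[OF continuous_on_root_energy root_energy_pos]) auto
  then show ?thesis
    by metis
qed

end

section \<open>Formal linear combinations\<close>

definition lincomb :: "('g \<Rightarrow> 'v::real_vector) \<Rightarrow> (real \<times> 'g) list \<Rightarrow> 'v" where
  "lincomb f L = (\<Sum>(c, g)\<leftarrow>L. c *\<^sub>R f g)"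

lemma lincomb_Nil [simp]: "lincomb f [] = 0"
  and lincomb_Cons [simp]: "lincomb f ((c, g) # L) = c *\<^sub>R f g + lincomb f L"
  and lincomb_append [simp]: "lincomb f (L @ M) = lincomb f L + lincomb f M"
  by (simp_all add: lincomb_def)

definition neg_coeffs :: "(real \<times> 'g) list \<Rightarrow> (real \<times> 'g) list" where
  "neg_coeffs L = map (\<lambda>(c, g). (- c, g)) L"

definition scale_coeffs :: "real \<Rightarrow> (real \<times> 'g) list \<Rightarrow> (real \<times> 'g) list" where
  "scale_coeffs a L = map (\<lambda>(c, g). (a * c, g)) L"

lemma lincomb_neg_coeffs [simp]: "lincomb f (neg_coeffs L) = - lincomb f L"
  by (induction L) (auto simp: neg_coeffs_def)

lemma lincomb_scale_coeffs [simp]: "lincomb f (scale_coeffs a L) = a *\<^sub>R lincomb f L"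
  by (induction L) (auto simp: scale_coeffs_def scaleR_add_right)

lemma neg_coeffs_lists: "L \<in> lists (UNIV \<times> C) \<Longrightarrow> neg_coeffs L \<in> lists (UNIV \<times> C)"
  and scale_coeffs_lists: "L \<in> lists (UNIV \<times> C) \<Longrightarrow> scale_coeffs a L \<in> lists (UNIV \<times> C)"
  by (auto simp: neg_coeffs_def scale_coeffs_def)

lemma lincomb_diff_fun: "lincomb (\<lambda>g. f g - h g) L = lincomb f L - lincomb h L"
  by (induction L) (auto simp: algebra_simps)

lemma lincomb_const: "lincomb (\<lambda>g. v) L = sum_list (map fst L) *\<^sub>R v"
  by (induction L) (auto simp: scaleR_add_left)

lemma lincomb_bounded_linear:
  assumes "bounded_linear T"
  shows "T (lincomb f L) = lincomb (\<lambda>g. T (f g)) L"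
  by (induction L) (auto simp: linear_simps[OF assms])

lemma lincomb_cong:
  assumes "\<And>g. g \<in> C \<Longrightarrow> f g = f' g" "L \<in> lists (UNIV \<times> C)"
  shows "lincomb f L = lincomb f' L"
  using assms(2) by (induction L) (auto simp: assms(1))

context group
begin

definition translate_coeffs :: "'a \<Rightarrow> (real \<times> 'a) list \<Rightarrow> (real \<times> 'a) list" where
  "translate_coeffs g L = map (\<lambda>(c, h). (c, g \<otimes> h)) L @ [(- sum_list (map fst L), g)]"

lemma lincomb_translate_coeffs: "lincomb f (translate_coeffs g L) = lincomb (\<lambda>h. f (g \<otimes> h) - f g) L"
proof -
  have "lincomb f (map (\<lambda>(c, h). (c, g \<otimes> h)) L) = lincomb (\<lambda>h. f (g \<otimes> h)) L"
    by (induction L) auto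
  then show ?thesis
    by (simp add: translate_coeffs_def lincomb_diff_fun lincomb_const)
qed

lemma translate_coeffs_lists:
  "g \<in> carrier G \<Longrightarrow> L \<in> lists (UNIV \<times> carrier G) \<Longrightarrow> translate_coeffs g L \<in> lists (UNIV \<times> carrier G)"
  by (induction L) (auto simp: translate_coeffs_def)

lemma lincomb_translate_coeffs_mult:
  assumes "g \<in> carrier G" "h \<in> carrier G" "L \<in> lists (UNIV \<times> carrier G)"
  shows "lincomb f (translate_coeffs g (translate_coeffs h L)) = lincomb f (translate_coeffs (g \<otimes> h) L)"
proof -
  have "lincomb f (translate_coeffs g (translate_coeffs h L))
      = lincomb (\<lambda>k. f (g \<otimes> (h \<otimes> k)) - f g - (f (g \<otimes> h) - f g)) L"
    by (simp add: lincomb_translate_coeffs)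
  also have "\<dots> = lincomb (\<lambda>k. f ((g \<otimes> h) \<otimes> k) - f (g \<otimes> h)) L"
    using assms by (intro lincomb_cong[where C = "carrier G"]) (auto simp: m_assoc)
  finally show ?thesis
    by (simp add: lincomb_translate_coeffs)
qed

end

section \<open>The scaling limit\<close>

locale scaling_limit = fixed_point_free_action G S A b x
  for G :: "('g, 'c) monoid_scheme" (structure) and S
    and A :: "'g \<Rightarrow> ('a::{real_inner,complete_space} \<Rightarrow>\<^sub>L 'a)" and b x +
  fixes p :: "nat \<Rightarrow> 'a" and r :: "nat \<Rightarrow> nat" and z :: "'g \<Rightarrow> 'h::{real_inner,complete_space}"
  assumes almost_minimal: "\<And>n w. norm (w - p n) \<le> (real n + 1) * root_energy (p n) \<Longrightarrow>
      (1 - 1 / (real n + 2)) * root_energy (p n) \<le> root_energy w"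
    and strict_mono_r: "strict_mono r"
    and gram_limit: "\<And>g h. g \<in> carrier G \<Longrightarrow> h \<in> carrier G \<Longrightarrow>
      (\<lambda>n. inner (rescaled_displacement (p (r n)) g) (rescaled_displacement (p (r n)) h))
        \<longlonglongrightarrow> inner (z g) (z h)"
begin

abbreviation u :: "nat \<Rightarrow> 'g \<Rightarrow> 'a" where
  "u n \<equiv> rescaled_displacement (p n)"

abbreviation combs :: "(real \<times> 'g) list set" where
  "combs \<equiv> lists (UNIV \<times> carrier G)"

lemma lincomb_u_translate_coeffs:
  assumes "g \<in> carrier G" "L \<in> combs"
  shows "lincomb (u n) (translate_coeffs g L) = blinfun_apply (A g) (lincomb (u n) L)"
proof -
  have "lincomb (u n) (translate_coeffs g L) = lincomb (\<lambda>h. blinfun_apply (A g) (u n h)) L"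
    unfolding lincomb_translate_coeffs
    using assms by (intro lincomb_cong[where C = "carrier G"]) (auto simp: rescaled_displacement_mult)
  also have "\<dots> = blinfun_apply (A g) (lincomb (u n) L)"
    by (rule lincomb_bounded_linear[symmetric]) (rule blinfun.bounded_linear_right)
  finally show ?thesis .
qed

lemma tendsto_inner_lincomb:
  assumes "L \<in> combs" "M \<in> combs"
  shows "(\<lambda>n. inner (lincomb (u (r n)) L) (lincomb (u (r n)) M)) \<longlonglongrightarrow> inner (lincomb z L) (lincomb z M)"
proof -
  have single: "(\<lambda>n. inner (u (r n) g) (lincomb (u (r n)) M)) \<longlonglongrightarrow> inner (z g) (lincomb z M)"
    if "g \<in> carrier G" for g
    using assms(2)
  proof (induction M)
    case (Cons a M)
    then show ?case
      using that by (cases a) (auto simp: inner_add_right intro!: tendsto_add tendsto_mult_left gram_limit)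
  qed simp
  show ?thesis
    using assms(1)
  proof (induction L)
    case (Cons a L)
    then show ?case
      by (cases a) (auto simp: inner_add_left intro!: tendsto_add tendsto_mult_left single)
  qed simp
qed

lemma tendsto_norm_lincomb:
  assumes "L \<in> combs"
  shows "(\<lambda>n. norm (lincomb (u (r n)) L)) \<longlonglongrightarrow> norm (lincomb z L)"
  using tendsto_real_sqrt[OF tendsto_inner_lincomb[OF assms assms]] by (simp add: norm_eq_sqrt_inner)

lemma z_one: "z \<one> = 0"
proof -
  have "(\<lambda>n. 0) \<longlonglongrightarrow> inner (z \<one>) (z \<one>)"
    using gram_limit[of \<one> \<one>] by (simp add: rescaled_displacement_one)
  then show ?thesis
    by (simp add: LIMSEQ_const_iff)
qed

lemma norm_lincomb_z_translate_le:
  assumes "g \<in> carrier G" "L \<in> combs"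
  shows "norm (lincomb z (translate_coeffs g L)) \<le> norm (A g) * norm (lincomb z L)"
proof (rule tendsto_le[of sequentially])
  show "(\<lambda>n. norm (lincomb (u (r n)) (translate_coeffs g L))) \<longlonglongrightarrow> norm (lincomb z (translate_coeffs g L))"
    by (intro tendsto_norm_lincomb translate_coeffs_lists assms)
  show "(\<lambda>n. norm (A g) * norm (lincomb (u (r n)) L)) \<longlonglongrightarrow> norm (A g) * norm (lincomb z L)"
    by (intro tendsto_intros tendsto_norm_lincomb assms)
  show "\<forall>\<^sub>F n in sequentially. norm (lincomb (u (r n)) (translate_coeffs g L)) \<le> norm (A g) * norm (lincomb (u (r n)) L)"
    by (simp add: lincomb_u_translate_coeffs[OF assms] norm_blinfun)
qed simp

lemma lincomb_z_translate_coeffs_cong: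
  assumes "g \<in> carrier G" "L \<in> combs" "M \<in> combs" "lincomb z L = lincomb z M"
  shows "lincomb z (translate_coeffs g L) = lincomb z (translate_coeffs g M)"
proof -
  have "L @ neg_coeffs M \<in> combs"
    using assms(2,3) neg_coeffs_lists by auto
  from norm_lincomb_z_translate_le[OF assms(1) this] assms(4)
  have "lincomb z (translate_coeffs g (L @ neg_coeffs M)) = 0"
    by simp
  then show ?thesis
    by (simp add: lincomb_translate_coeffs)
qed

definition V0 :: "'h set" where
  "V0 = {lincomb z L | L. L \<in> combs}"

lemma V0E:
  assumes "v \<in> V0"
  obtains L where "L \<in> combs" "v = lincomb z L"
  using assms unfolding V0_def by blast

lemma lincomb_z_in_V0: "L \<in> combs \<Longrightarrow> lincomb z L \<in> V0"
  unfolding V0_def by blast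

lemma z_in_V0: "g \<in> carrier G \<Longrightarrow> z g \<in> V0"
  using lincomb_z_in_V0[of "[(1, g)]"] by simp

lemma subspace_V0: "subspace V0"
  unfolding subspace_def
proof (intro conjI ballI allI)
  show "0 \<in> V0"
    using lincomb_z_in_V0[of "[]"] by simp
  fix v w
  assume "v \<in> V0" "w \<in> V0"
  then show "v + w \<in> V0"
    using lincomb_z_in_V0[of "_ @ _"] by (elim V0E) auto
next
  fix c :: real and v
  assume "v \<in> V0"
  then show "c *\<^sub>R v \<in> V0"
    using lincomb_z_in_V0[OF scale_coeffs_lists] by (elim V0E) auto
qed

text \<open>By lincomb_z_translate_coeffs_cong the value does not depend on the representative
  chosen by SOME.\<close>

definition T0 :: "'g \<Rightarrow> 'h \<Rightarrow> 'h" where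
  "T0 g v = lincomb z (translate_coeffs g (SOME L. L \<in> combs \<and> lincomb z L = v))"

lemma T0_lincomb:
  assumes "g \<in> carrier G" "L \<in> combs"
  shows "T0 g (lincomb z L) = lincomb z (translate_coeffs g L)"
proof -
  have "\<exists>M. M \<in> combs \<and> lincomb z M = lincomb z L"
    using assms(2) by blast
  then have "(SOME M. M \<in> combs \<and> lincomb z M = lincomb z L) \<in> combs \<and>
      lincomb z (SOME M. M \<in> combs \<and> lincomb z M = lincomb z L) = lincomb z L"
    by (rule someI_ex)
  then show ?thesis
    unfolding T0_def using lincomb_z_translate_coeffs_cong[OF assms(1) _ assms(2)] by blast
qed

lemma T0_add:
  assumes "g \<in> carrier G" "v \<in> V0" "w \<in> V0"
  shows "T0 g (v + w) = T0 g v + T0 g w"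
proof -
  obtain L M where L: "L \<in> combs" "v = lincomb z L" and M: "M \<in> combs" "w = lincomb z M"
    using assms(2,3) by (elim V0E)
  have "T0 g (v + w) = T0 g (lincomb z (L @ M))"
    using L M by simp
  also have "\<dots> = lincomb z (translate_coeffs g (L @ M))"
    using L M assms(1) by (intro T0_lincomb) auto
  also have "\<dots> = T0 g v + T0 g w"
    using L M assms(1) by (simp add: T0_lincomb lincomb_translate_coeffs)
  finally show ?thesis .
qed

lemma T0_scale:
  assumes "g \<in> carrier G" "v \<in> V0"
  shows "T0 g (c *\<^sub>R v) = c *\<^sub>R T0 g v"
proof -
  obtain L where L: "L \<in> combs" "v = lincomb z L"
    using assms(2) by (elim V0E)
  have "T0 g (c *\<^sub>R v) = T0 g (lincomb z (scale_coeffs c L))"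
    using L by simp
  also have "\<dots> = lincomb z (translate_coeffs g (scale_coeffs c L))"
    using L assms(1) by (intro T0_lincomb scale_coeffs_lists)
  also have "\<dots> = c *\<^sub>R T0 g v"
    using L assms(1) by (simp add: T0_lincomb scale_coeffs_lists lincomb_translate_coeffs)
  finally show ?thesis .
qed

lemma T0_in_V0: "g \<in> carrier G \<Longrightarrow> v \<in> V0 \<Longrightarrow> T0 g v \<in> V0"
  by (elim V0E) (simp add: T0_lincomb lincomb_z_in_V0 translate_coeffs_lists)

lemma norm_T0_le: "g \<in> carrier G \<Longrightarrow> v \<in> V0 \<Longrightarrow> norm (T0 g v) \<le> norm (A g) * norm v"
  by (elim V0E) (simp add: T0_lincomb norm_lincomb_z_translate_le)

lemma T0_mult:
  "g \<in> carrier G \<Longrightarrow> h \<in> carrier G \<Longrightarrow> v \<in> V0 \<Longrightarrow> T0 g (T0 h v) = T0 (g \<otimes> h) v"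
  by (elim V0E) (simp add: T0_lincomb translate_coeffs_lists lincomb_translate_coeffs_mult)

lemma T0_one: "v \<in> V0 \<Longrightarrow> T0 \<one> v = v"
  by (elim V0E) (auto simp: T0_lincomb lincomb_translate_coeffs z_one
      intro: lincomb_cong[where C = "carrier G"])

lemma T0_z: "g \<in> carrier G \<Longrightarrow> h \<in> carrier G \<Longrightarrow> T0 g (z h) = z (g \<otimes> h) - z g"
  using T0_lincomb[of g "[(1, h)]"] by (simp add: lincomb_translate_coeffs)

definition V :: "'h set" where
  "V = closure V0"

sublocale V: hilbert_subspace V
  by unfold_locales (simp_all add: V_def subspace_closure subspace_V0)

definition T :: "'g \<Rightarrow> 'h \<Rightarrow> 'h" where
  "T g = closure_extension V0 (T0 g)"

lemma T_closure_extension: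
  assumes "g \<in> carrier G"
  shows continuous_on_T: "continuous_on V (T g)"
    and T_eq_T0: "v \<in> V0 \<Longrightarrow> T g v = T0 g v"
    and T_add: "v \<in> V \<Longrightarrow> w \<in> V \<Longrightarrow> T g (v + w) = T g v + T g w"
    and T_scale: "v \<in> V \<Longrightarrow> T g (c *\<^sub>R v) = c *\<^sub>R T g v"
    and norm_T_le: "v \<in> V \<Longrightarrow> norm (T g v) \<le> norm (A g) * norm v"
  using bounded_linear_closure_extension[OF subspace_V0 norm_ge_zero[of "A g"] T0_add[OF assms] T0_scale[OF assms]
      norm_T0_le[OF assms]]
  by (simp_all add: T_def V_def)

lemma T_in_V:
  assumes "g \<in> carrier G" "v \<in> V"
  shows "T g v \<in> V"
proof -
  have "T g ` closure V0 \<subseteq> V"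
  proof (rule image_closure_subset)
    show "T g ` V0 \<subseteq> V"
      using T0_in_V0[OF assms(1)] T_eq_T0[OF assms(1)] closure_subset by (force simp: V_def)
  qed (use continuous_on_T[OF assms(1)] in \<open>simp_all add: V_def\<close>)
  then show ?thesis
    using assms(2) by (auto simp: V_def)
qed

lemma T_mult:
  assumes "g \<in> carrier G" "h \<in> carrier G" "v \<in> V"
  shows "T g (T h v) = T (g \<otimes> h) v"
proof (rule continuous_on_closure_eqI[of V0 "\<lambda>v. T g (T h v)"])
  show "continuous_on (closure V0) (\<lambda>v. T g (T h v))"
    using continuous_on_T[OF assms(1)] continuous_on_T[OF assms(2)] T_in_V[OF assms(2)]
    by (intro continuous_on_compose2[of V "T g" _ "T h"]) (auto simp: V_def)
  show "continuous_on (closure V0) (T (g \<otimes> h))"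
    using continuous_on_T assms by (simp add: V_def)
  show "T g (T h v) = T (g \<otimes> h) v" if "v \<in> V0" for v
    using that assms(1,2) by (simp add: T_eq_T0 T0_in_V0 T0_mult)
qed (use assms(3) in \<open>simp add: V_def\<close>)

lemma T_one: "v \<in> V \<Longrightarrow> T \<one> v = v"
  using continuous_on_closure_eqI[of V0 "T \<one>" id v] continuous_on_T[of \<one>]
  by (simp add: V_def T_eq_T0 T0_one)

lemma T_z: "g \<in> carrier G \<Longrightarrow> h \<in> carrier G \<Longrightarrow> T g (z h) = z (g \<otimes> h) - z g"
  by (simp add: T_eq_T0 z_in_V0 T0_z)

definition lin_lim :: "'g \<Rightarrow> 'h \<Rightarrow> 'h" where
  "lin_lim g v = T g (V.proj v) + (v - V.proj v)"

lemma bounded_linear_lin_lim: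
  assumes "g \<in> carrier G"
  shows "bounded_linear (lin_lim g)"
proof (rule bounded_linear_intro[of _ "norm (A g) + 1"])
  fix u v
  show "lin_lim g (u + v) = lin_lim g u + lin_lim g v"
    using V.proj_in assms by (simp add: lin_lim_def linear_add[OF V.linear_proj] T_add algebra_simps)
next
  fix c :: real and v
  show "lin_lim g (c *\<^sub>R v) = c *\<^sub>R lin_lim g v"
    using V.proj_in assms
    by (simp add: lin_lim_def linear_scale[OF V.linear_proj] T_scale algebra_simps)
next
  fix v
  have "norm (lin_lim g v) \<le> norm (A g) * norm (V.proj v) + norm (v - V.proj v)"
    using norm_triangle_ineq[of "T g (V.proj v)" "v - V.proj v"] norm_T_le[OF assms V.proj_in, of v]
    by (simp add: lin_lim_def)
  also have "\<dots> \<le> norm v * (norm (A g) + 1)"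
    using V.norm_proj_complement_le[of v] mult_left_mono[OF V.norm_proj_le[of v] norm_ge_zero[of "A g"]]
    by (simp add: algebra_simps)
  finally show "norm (lin_lim g v) \<le> norm v * (norm (A g) + 1)" .
qed

definition A_lim :: "'g \<Rightarrow> ('h \<Rightarrow>\<^sub>L 'h)" where
  "A_lim g = (if g \<in> carrier G then Blinfun (lin_lim g) else id_blinfun)"

lemma A_lim_apply: "g \<in> carrier G \<Longrightarrow> blinfun_apply (A_lim g) v = lin_lim g v"
  by (simp add: A_lim_def bounded_linear_Blinfun_apply[OF bounded_linear_lin_lim])

lemma proj_lin_lim:
  assumes "g \<in> carrier G"
  shows "V.proj (lin_lim g v) = T g (V.proj v)"
proof -
  have "V.proj (lin_lim g v) = V.proj (T g (V.proj v)) + V.proj (v - V.proj v)"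
    by (simp add: lin_lim_def linear_add[OF V.linear_proj])
  also have "\<dots> = T g (V.proj v)"
    using T_in_V[OF assms V.proj_in] by (simp add: V.proj_id V.proj_of_orthogonal)
  finally show ?thesis .
qed

lemma lin_lim_z:
  assumes "g \<in> carrier G" "h \<in> carrier G"
  shows "lin_lim g (z h) = z (g \<otimes> h) - z g"
proof -
  have "z h \<in> V"
    using z_in_V0[OF assms(2)] closure_subset by (auto simp: V_def)
  then show ?thesis
    using assms by (simp add: lin_lim_def V.proj_id T_z)
qed

lemma norm_A_lim_le:
  assumes "g \<in> carrier G"
  shows "norm (A_lim g) \<le> max 1 (norm (A g))"
proof (rule norm_blinfun_bound)
  fix v
  define M where "M = max 1 (norm (A g))"
  have "(norm (blinfun_apply (A_lim g) v))\<^sup>2 = (norm (T g (V.proj v)))\<^sup>2 + (norm (v - V.proj v))\<^sup>2"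
    using V.proj_orthogonal[OF T_in_V[OF assms V.proj_in], of v]
    by (simp add: A_lim_apply[OF assms] lin_lim_def norm_add_Pythagorean orthogonal_def inner_commute)
  also have "\<dots> \<le> (M * norm (V.proj v))\<^sup>2 + (M * norm (v - V.proj v))\<^sup>2"
  proof (intro add_mono power_mono)
    show "norm (T g (V.proj v)) \<le> M * norm (V.proj v)"
      using norm_T_le[OF assms V.proj_in, of v] mult_right_mono[of "norm (A g)" M "norm (V.proj v)"]
      by (simp add: M_def)
    show "norm (v - V.proj v) \<le> M * norm (v - V.proj v)"
      using mult_right_mono[of 1 M "norm (v - V.proj v)"] by (simp add: M_def)
  qed simp_all
  also have "\<dots> = (M * norm v)\<^sup>2"
    using V.norm_proj_pythagoras[of v] by (simp add: algebra_simps)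
  finally show "norm (blinfun_apply (A_lim g) v) \<le> max 1 (norm (A g)) * norm v"
    unfolding M_def by (rule power2_le_imp_le) simp
qed simp

lemma affine_action_lim: "affine_action G A_lim z"
  unfolding affine_action_def
proof (intro conjI ballI allI)
  fix v
  show "aff A_lim z \<one> v = v"
    using T_one[OF V.proj_in] by (simp add: aff_def A_lim_apply lin_lim_def z_one)
next
  fix g h v
  assume g: "g \<in> carrier G" and h: "h \<in> carrier G"
  have "lin_lim g (lin_lim h v) = lin_lim (g \<otimes> h) v"
    using g h V.proj_in by (simp add: lin_lim_def[of g] proj_lin_lim T_mult) (simp add: lin_lim_def)
  then show "aff A_lim z (g \<otimes> h) v = aff A_lim z g (aff A_lim z h v)"
    using g h linear_add[OF bounded_linear.linear[OF bounded_linear_lin_lim[OF g]]]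
    by (simp add: aff_def A_lim_apply lin_lim_z)
qed

definition affine_coeffs :: "'g \<Rightarrow> (real \<times> 'g) list \<Rightarrow> (real \<times> 'g) list" where
  "affine_coeffs g L = translate_coeffs g L @ [(1, g)]"

lemma affine_coeffs_lists: "g \<in> carrier G \<Longrightarrow> L \<in> combs \<Longrightarrow> affine_coeffs g L \<in> combs"
  by (simp add: affine_coeffs_def translate_coeffs_lists)

lemma aff_u_lincomb:
  "g \<in> carrier G \<Longrightarrow> L \<in> combs \<Longrightarrow> aff A (u n) g (lincomb (u n) L) = lincomb (u n) (affine_coeffs g L)"
  by (simp add: aff_def affine_coeffs_def lincomb_u_translate_coeffs)

lemma aff_lim_lincomb:
  assumes "g \<in> carrier G" "L \<in> combs"
  shows "aff A_lim z g (lincomb z L) = lincomb z (affine_coeffs g L)"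
proof -
  have "lincomb z L \<in> V"
    using lincomb_z_in_V0[OF assms(2)] closure_subset by (auto simp: V_def)
  then have "blinfun_apply (A_lim g) (lincomb z L) = T0 g (lincomb z L)"
    using assms lincomb_z_in_V0 by (simp add: A_lim_apply lin_lim_def V.proj_id T_eq_T0)
  then show ?thesis
    using assms by (simp add: aff_def affine_coeffs_def T0_lincomb)
qed

definition energy_lim :: "'h \<Rightarrow> real" where
  "energy_lim = orbit_energy G S x (aff A_lim z)"

lemma energy_lim_proj: "energy_lim v = energy_lim (V.proj v)"
proof -
  have "aff A_lim z g v = aff A_lim z g (V.proj v) + (v - V.proj v)" if "g \<in> carrier G" for g
    using that V.proj_in by (simp add: aff_def A_lim_apply lin_lim_def V.proj_id)
  then show ?thesis
    unfolding energy_lim_def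
    using x_carrier S_carrier by (intro orbit_energy_scaled[where c = 1, simplified]) auto
qed

lemma continuous_on_energy_lim: "continuous_on UNIV energy_lim"
  unfolding energy_lim_def orbit_energy_def local_energy_def aff_def
  by (intro continuous_intros)

lemma tendsto_orbit_energy_lincomb:
  assumes "L \<in> combs"
  shows "(\<lambda>n. orbit_energy G S x (aff A (u (r n))) (lincomb (u (r n)) L)) \<longlonglongrightarrow> energy_lim (lincomb z L)"
proof -
  have "(\<lambda>n. norm (aff A (u (r n)) x (lincomb (u (r n)) L) - aff A (u (r n)) (x \<otimes> s) (lincomb (u (r n)) L)))
      \<longlonglongrightarrow> norm (aff A_lim z x (lincomb z L) - aff A_lim z (x \<otimes> s) (lincomb z L))" if "s \<in> S" for s
  proof -
    have xs: "x \<otimes> s \<in> carrier G"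
      using that x_carrier S_carrier by auto
    then have "affine_coeffs x L @ neg_coeffs (affine_coeffs (x \<otimes> s) L) \<in> combs"
      using assms x_carrier by (simp add: affine_coeffs_lists neg_coeffs_lists)
    from tendsto_norm_lincomb[OF this] show ?thesis
      using assms x_carrier xs by (simp add: aff_u_lincomb aff_lim_lincomb)
  qed
  then show ?thesis
    unfolding energy_lim_def orbit_energy_def local_energy_def
    by (intro tendsto_mult_left tendsto_sum tendsto_power)
qed

lemma energy_lim_zero: "energy_lim 0 = 1"
  using tendsto_orbit_energy_lincomb[of "[]"] by (simp add: orbit_energy_rescaled_zero LIMSEQ_const_iff)

lemma orbit_energy_rescaled_lower:
  assumes "norm w \<le> real n + 1"
  shows "(1 - 1 / (real n + 2))\<^sup>2 \<le> orbit_energy G S x (aff A (u n)) w"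
proof -
  define F where "F = root_energy (p n)"
  have F: "0 < F"
    by (simp add: F_def root_energy_pos)
  have "norm ((p n + F *\<^sub>R w) - p n) \<le> (real n + 1) * F"
    using mult_right_mono[OF assms less_imp_le[OF F]] F by (simp add: mult.commute)
  then have "(1 - 1 / (real n + 2)) * F \<le> root_energy (p n + F *\<^sub>R w)"
    unfolding F_def by (rule almost_minimal)
  then have "((1 - 1 / (real n + 2)) * F)\<^sup>2 \<le> (root_energy (p n + F *\<^sub>R w))\<^sup>2"
    using F by (intro power_mono) (auto simp: field_simps)
  also have "\<dots> = energy (p n + F *\<^sub>R w)"
    by (rule root_energy_squared)
  also have "\<dots> = F\<^sup>2 * orbit_energy G S x (aff A (u n)) w"
    unfolding F_def by (rule energy_rescaled)
  finally show ?thesis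
    using F by (simp add: power_mult_distrib mult.commute)
qed

lemma energy_lim_lincomb_ge_1:
  assumes "L \<in> combs"
  shows "1 \<le> energy_lim (lincomb z L)"
proof -
  obtain N :: nat where N: "norm (lincomb z L) + 1 \<le> real N"
    using real_arch_simple by blast
  have "\<forall>\<^sub>F n in sequentially. norm (lincomb (u (r n)) L) < norm (lincomb z L) + 1"
    using tendsto_norm_lincomb[OF assms] by (rule order_tendstoD) simp
  moreover have "\<forall>\<^sub>F n in sequentially. N \<le> n"
    by (rule eventually_ge_at_top)
  ultimately have "\<forall>\<^sub>F n in sequentially.
      (1 - 1 / (real n + 2))\<^sup>2 \<le> orbit_energy G S x (aff A (u (r n))) (lincomb (u (r n)) L)"
  proof eventually_elim
    case (elim n)
    have "n \<le> r n"
      using strict_mono_r by (rule seq_suble)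
    then have "(1 - 1 / (real n + 2))\<^sup>2 \<le> (1 - 1 / (real (r n) + 2))\<^sup>2"
      by (intro power_mono) (auto simp: field_simps)
    also have "\<dots> \<le> orbit_energy G S x (aff A (u (r n))) (lincomb (u (r n)) L)"
      using elim N \<open>n \<le> r n\<close> by (intro orbit_energy_rescaled_lower) linarith
    finally show ?case .
  qed
  moreover have "(\<lambda>n. 1 / (real n + 2)) \<longlonglongrightarrow> 0"
    using LIMSEQ_Suc[OF LIMSEQ_Suc[OF lim_1_over_n]] by (simp add: add.commute)
  then have "(\<lambda>n. (1 - 1 / (real n + 2))\<^sup>2) \<longlonglongrightarrow> (1 - 0)\<^sup>2"
    by (intro tendsto_intros)
  ultimately show ?thesis
    using tendsto_le[OF _ tendsto_orbit_energy_lincomb[OF assms]] by simp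
qed

lemma energy_lim_ge_1: "1 \<le> energy_lim v"
proof -
  have ge_1: "1 \<le> energy_lim w" if "w \<in> closure V0" for w
    by (rule continuous_ge_on_closure[OF continuous_on_subset[OF continuous_on_energy_lim] that])
      (auto elim!: V0E intro: energy_lim_lincomb_ge_1)
  have "V.proj v \<in> closure V0"
    using V.proj_in by (simp add: V_def)
  then show ?thesis
    using energy_lim_proj[of v] ge_1 by simp
qed

lemma orbit_map_minimizes_local_energy:
  defines "f \<equiv> \<lambda>y. aff A_lim z y 0"
  shows "equivariant G (aff A_lim z) f" "local_energy G S f x = 1"
    and "\<And>f'. equivariant G (aff A_lim z) f' \<Longrightarrow> local_energy G S f x \<le> local_energy G S f' x"
proof -
  show f: "equivariant G (aff A_lim z) f"
    unfolding f_def by (rule equivariant_orbit_map[OF affine_action_lim])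
  have "f \<one> = 0"
    using affine_action_lim by (simp add: f_def affine_action_def)
  then show "local_energy G S f x = 1"
    using local_energy_equivariant[OF f x_carrier S_carrier] energy_lim_zero by (simp add: energy_lim_def)
  then show "local_energy G S f x \<le> local_energy G S f' x" if "equivariant G (aff A_lim z) f'" for f'
    using local_energy_equivariant[OF that x_carrier S_carrier] energy_lim_ge_1[of "f' \<one>"]
    by (simp add: energy_lim_def)
qed

lemma orbit_map_nonconstant: "\<exists>y\<in>carrier G. \<exists>y'\<in>carrier G. aff A_lim z y 0 \<noteq> aff A_lim z y' 0"
proof (rule ccontr)
  assume const: "\<not> ?thesis"
  have "aff A_lim z (x \<otimes> s) 0 = aff A_lim z x 0" if "s \<in> S" for s
    using const x_carrier S_carrier that by (meson m_closed subsetD)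
  then have "local_energy G S (\<lambda>y. aff A_lim z y 0) x = 0"
    by (simp add: local_energy_def)
  then show False
    using orbit_map_minimizes_local_energy(2) by simp
qed

lemma linear_growth_bound_lim:
  assumes "linear_growth_bound G S A C \<sigma>"
  shows "linear_growth_bound G S A_lim C \<sigma>"
proof -
  obtain v :: 'a where "v \<noteq> 0"
    using nonzero_vector_exists by blast
  then show ?thesis
    using linear_growth_bound_max_1[OF action S_carrier S_inv _ norm_A_lim_le assms] by blast
qed

end

context fixed_point_free_action
begin

lemma scaling_limit_exists:
  fixes e :: "nat \<Rightarrow> 'h::{real_inner,complete_space}"
  assumes "orthonormal_seq e"
  obtains p r and z :: "'g \<Rightarrow> 'h" where "scaling_limit G S A b x p r z"
proof -
  obtain p where p: "\<And>n w. norm (w - p n) \<le> (real n + 1) * root_energy (p n) \<Longrightarrow>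
      (1 - 1 / (real n + 2)) * root_energy (p n) \<le> root_energy w"
    using almost_minimizers_exist by blast
  obtain r and z :: "'g \<Rightarrow> 'h" where "strict_mono r"
    "\<And>g h. g \<in> carrier G \<Longrightarrow> h \<in> carrier G \<Longrightarrow>
      (\<lambda>n. inner (rescaled_displacement (p (r n)) g) (rescaled_displacement (p (r n)) h))
        \<longlonglongrightarrow> inner (z g) (z h)"
    using gram_limit_realization[where u = "\<lambda>n. rescaled_displacement (p n)",
        OF countable_carrier _ assms bounded_rescaled_displacement] one_closed
    by blast
  with p have "scaling_limit G S A b x p r z"
    by (intro scaling_limit.intro scaling_limit_axioms.intro fixed_point_free_action_axioms)
  then show thesis
    by (rule that)
qed

end

theorem mainTheorem6:
  fixes G :: "('g, 'c) monoid_scheme"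
    and S :: "'g set"
    and A :: "'g \<Rightarrow> ('a::{real_inner,complete_space} \<Rightarrow>\<^sub>L 'a)"
    and b :: "'g \<Rightarrow> 'a"
    and x :: 'g
  assumes "group G"
    and "finite S" and "S \<subseteq> carrier G"
    and "\<forall>s\<in>S. inv\<^bsub>G\<^esub> s \<in> S"
    and "generate G S = carrier G"
    and "affine_action G A b"
    and "\<not> has_fixed_point G (aff A b)"
    and "x \<in> carrier G"
    and "\<exists>B :: 'b::{real_inner,complete_space} set. infinite B \<and> independent B"
  shows "\<exists>(A' :: 'g \<Rightarrow> ('b \<Rightarrow>\<^sub>L 'b)) (b' :: 'g \<Rightarrow> 'b) (f :: 'g \<Rightarrow> 'b).
           affine_action G A' b' \<and>
           equivariant G (aff A' b') f \<and>
           (\<exists>y\<in>carrier G. \<exists>z\<in>carrier G. f y \<noteq> f z) \<and>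
           (\<forall>g :: 'g \<Rightarrow> 'b. equivariant G (aff A' b') g \<longrightarrow>
               local_energy G S f x \<le> local_energy G S g x) \<and>
           (\<forall>C \<sigma>. C > 0 \<longrightarrow> \<sigma> \<ge> 0 \<longrightarrow> linear_growth_bound G S A C \<sigma> \<longrightarrow>
               linear_growth_bound G S A' C \<sigma>)"
proof -
  interpret fixed_point_free_action G S A b x
    by (intro fixed_point_free_action.intro fixed_point_free_action_axioms.intro assms(1)) (use assms in auto)
  obtain B :: "'b set" where "infinite B" "independent B"
    using assms(9) by blast
  then obtain e :: "nat \<Rightarrow> 'b" where "orthonormal_seq e"
    by (rule orthonormal_seq_exists)
  then obtain p r and z :: "'g \<Rightarrow> 'b" where "scaling_limit G S A b x p r z"
    by (rule scaling_limit_exists)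
  then interpret scaling_limit G S A b x p r z .
  show ?thesis
    using affine_action_lim orbit_map_minimizes_local_energy orbit_map_nonconstant linear_growth_bound_lim
    by (intro exI[of _ A_lim] exI[of _ z] exI[of _ "\<lambda>y. aff A_lim z y 0"]) blast
qed

end
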